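(* Let $\mathcal{A}$ be a weight graded algebra. \begin{itemize} \item[(i)] On the level of underlying ns collections, we have \[ \mathcal{U}_{\min}(\mathcal{A})\cong \mathcal{A}^+ . \] \item[(ii)] The underlying ns collection of $\mathcal{U}_{\max}(\mathcal{A})$ has a basis formed by the cosets of tree monomials for which the leftmost input of each internal vertex is a leaf. \end{itemize}
   Context: Work over a field $\Bbbk$. A weight graded algebra $\mathcal{A}$ is a connected ($\mathcal{A}(0)\cong\Bbbk$) monoid in nonsymmetric (ns) collections for the tensor product $(\mathcal{P}\otimes\mathcal{Q})(n)=\bigoplus_{i+j=n}\mathcal{P}(i)\otimes\mathcal{Q}(j)$. Ns operads are reduced and connected. For a ns collection $\mathcal{A}$, its shift up is $\mathcal{A}^+(0)=0$, $\mathcal{A}^+(n)=\mathcal{A}(n-1)$ for $n\ge1$. The max-envelope operad $\mathcal{U}_{\max}(\mathcal{A})$ is the quotient of the free ns operad $\mathcal{T}(\mathcal{A}^+)$ by the ideal generated by $1-\mathrm{id}$ (identifying $\mathcal{A}(0)=\mathcal{A}^+(1)$) and all elements $a_1\circ_1 a_2-a_1\cdot a_2$; the min-envelope operad $\mathcal{U}_{\min}(\mathcal{A})$ is the quotient of $\mathcal{T}(\mathcal{A}^+)$ by the ideal generated by $1-\mathrm{id}$, all $a_1\circ_1 a_2-a_1\cdot a_2$, and all $a_1\circ_i a_2$ for $i\ge 2$. Here $a_1\in\mathcal{A}(k-1)=\mathcal{A}^+(k)$, $a_2\in\mathcal{A}(l-1)=\mathcal{A}^+(l)$, and $a_1\cdot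 a_2\in\mathcal{A}(k+l-2)=\mathcal{A}^+(k+l-1)$. Tree monomials refer to the basis of $\mathcal{T}(\mathcal{A}^+)$ (with the generator $1$ eliminated) obtained from a chosen basis of $\mathcal{A}$: planar trees whose internal vertices with $k$ inputs are decorated by basis elements of $\mathcal{A}(k-1)$. *)

theory Defs
  imports Main
begin

(* A weight graded algebra A over a field 'k is given by a
   homogeneous basis (type 'b) with weight function w, unit basis element one,
   and structure constants mult a b (a finitely supported function 'b => 'k).
   Vectors are finitely supported functions. *)

definition supp :: "('a \<Rightarrow> 'k::zero) \<Rightarrow> 'a set" where
  "supp f = {x. f x \<noteq> 0}"

definition delta :: "'a \<Rightarrow> 'a \<Rightarrow> 'k::{zero,one}" where
  "delta a = (\<lambda>x. if x = a then 1 else 0)"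

definition mulv :: "('b \<Rightarrow> 'b \<Rightarrow> 'b \<Rightarrow> 'k::field) \<Rightarrow> ('b \<Rightarrow> 'k) \<Rightarrow> ('b \<Rightarrow> 'k) \<Rightarrow> 'b \<Rightarrow> 'k" where
  "mulv mult f g = (\<lambda>z. \<Sum>a\<in>supp f. \<Sum>b\<in>supp g. f a * g b * mult a b z)"

(* weight graded algebra: connected monoid in ns collections, presented via a
   homogeneous basis containing the unit *)
definition wg_algebra :: "('b \<Rightarrow> nat) \<Rightarrow> 'b \<Rightarrow> ('b \<Rightarrow> 'b \<Rightarrow> 'b \<Rightarrow> 'k::field) \<Rightarrow> bool" where
  "wg_algebra w one mult \<longleftrightarrow>
     (\<forall>a b. finite (supp (mult a b))) \<and>
     (\<forall>a b z. mult a b z \<noteq> 0 \<longrightarrow> w z = w a + w b) \<and>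
     (\<forall>b. w b = 0 \<longleftrightarrow> b = one) \<and>
     (\<forall>b. mult one b = delta b \<and> mult b one = delta b) \<and>
     (\<forall>a b c. mulv mult (mult a b) (delta c) = mulv mult (delta a) (mult b c))"

definition Acomp :: "('b \<Rightarrow> nat) \<Rightarrow> nat \<Rightarrow> ('b \<Rightarrow> 'k::zero) set" where
  "Acomp w n = {f. finite (supp f) \<and> (\<forall>b\<in>supp f. w b = n)}"

definition Aplus :: "('b \<Rightarrow> nat) \<Rightarrow> nat \<Rightarrow> ('b \<Rightarrow> 'k::zero) set" where
  "Aplus w n = (if n = 0 then {\<lambda>_. 0} else Acomp w (n - 1))"

(* planar trees; Node b ts has inputs ts (left to right) *)
datatype 'b tree = Leaf | Node 'b "'b tree list"

fun ar :: "'b tree \<Rightarrow> nat" where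
  "ar Leaf = 1"
| "ar (Node b ts) = sum_list (map ar ts)"

(* tree monomials of T(A^+) with the generator 1 eliminated *)
fun wf_tree :: "('b \<Rightarrow> nat) \<Rightarrow> 'b \<Rightarrow> 'b tree \<Rightarrow> bool" where
  "wf_tree w one Leaf = True"
| "wf_tree w one (Node b ts) =
     (b \<noteq> one \<and> length ts = Suc (w b) \<and> (\<forall>t\<in>set ts. wf_tree w one t))"

(* graft i s u : insert u into the i-th (0-based) leaf of s, i.e. s \<circ>_(i+1) u *)
fun graft :: "nat \<Rightarrow> 'b tree \<Rightarrow> 'b tree \<Rightarrow> 'b tree"
and graft_list :: "nat \<Rightarrow> 'b tree list \<Rightarrow> 'b tree \<Rightarrow> 'b tree list" where
  "graft i Leaf u = (if i = 0 then u else Leaf)"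
| "graft i (Node b ts) u = Node b (graft_list i ts u)"
| "graft_list i [] u = []"
| "graft_list i (t # ts) u =
     (if i < ar t then graft i t u # ts else t # graft_list (i - ar t) ts u)"

definition Tcomp :: "('b \<Rightarrow> nat) \<Rightarrow> 'b \<Rightarrow> nat \<Rightarrow> ('b tree \<Rightarrow> 'k::zero) set" where
  "Tcomp w one n = {x. finite (supp x) \<and> (\<forall>t\<in>supp x. wf_tree w one t \<and> ar t = n)}"

(* bilinear extension of the partial composition: lcomp i x y = x \<circ>_(i+1) y *)
definition lcomp :: "nat \<Rightarrow> ('b tree \<Rightarrow> 'k::field) \<Rightarrow> ('b tree \<Rightarrow> 'k) \<Rightarrow> 'b tree \<Rightarrow> 'k" where
  "lcomp i x y = (\<lambda>t. \<Sum>s\<in>supp x. \<Sum>u\<in>supp y. if graft i s u = t then x s * y u else 0)"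

(* generator of T(A^+) attached to a basis element; 1 is identified with id *)
definition gen :: "('b \<Rightarrow> nat) \<Rightarrow> 'b \<Rightarrow> 'b \<Rightarrow> 'b tree" where
  "gen w one b = (if b = one then Leaf else Node b (replicate (Suc (w b)) Leaf))"

definition genv :: "('b \<Rightarrow> nat) \<Rightarrow> 'b \<Rightarrow> ('b \<Rightarrow> 'k::field) \<Rightarrow> 'b tree \<Rightarrow> 'k" where
  "genv w one f = (\<lambda>t. \<Sum>b\<in>supp f. f b * delta (gen w one b) t)"

inductive op_ideal :: "('b \<Rightarrow> nat) \<Rightarrow> 'b \<Rightarrow> (nat \<Rightarrow> ('b tree \<Rightarrow> 'k::field) \<Rightarrow> bool)
    \<Rightarrow> nat \<Rightarrow> ('b tree \<Rightarrow> 'k) \<Rightarrow> bool"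
  for w one R where
  gen: "R n x \<Longrightarrow> x \<in> Tcomp w one n \<Longrightarrow> op_ideal w one R n x"
| zero: "op_ideal w one R n (\<lambda>_. 0)"
| add: "op_ideal w one R n x \<Longrightarrow> op_ideal w one R n y \<Longrightarrow> op_ideal w one R n (\<lambda>t. x t + y t)"
| smult: "op_ideal w one R n x \<Longrightarrow> op_ideal w one R n (\<lambda>t. c * x t)"
| left: "op_ideal w one R n x \<Longrightarrow> y \<in> Tcomp w one m \<Longrightarrow> i < n
          \<Longrightarrow> op_ideal w one R (n + m - 1) (lcomp i x y)"
| right: "op_ideal w one R m x \<Longrightarrow> y \<in> Tcomp w one n \<Longrightarrow> i < n
          \<Longrightarrow> op_ideal w one R (n + m - 1) (lcomp i y x)"

(* relations a1 \<circ>_1 a2 - a1 \<cdot> a2, a1 \<in> A(p) = A^+(p+1), a2 \<in> A(q) = A^+(q+1) *)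
definition R_max :: "('b \<Rightarrow> nat) \<Rightarrow> 'b \<Rightarrow> ('b \<Rightarrow> 'b \<Rightarrow> 'b \<Rightarrow> 'k::field)
    \<Rightarrow> nat \<Rightarrow> ('b tree \<Rightarrow> 'k) \<Rightarrow> bool" where
  "R_max w one mult n x \<longleftrightarrow>
     (\<exists>p q a1 a2. a1 \<in> Acomp w p \<and> a2 \<in> Acomp w q \<and> n = p + q + 1 \<and>
        x = (\<lambda>t. lcomp 0 (genv w one a1) (genv w one a2) t
                  - genv w one (mulv mult a1 a2) t))"

(* additionally a1 \<circ>_i a2 for i \<ge> 2 (0-based index i \<ge> 1), a2 of positive weight *)
definition R_min :: "('b \<Rightarrow> nat) \<Rightarrow> 'b \<Rightarrow> ('b \<Rightarrow> 'b \<Rightarrow> 'b \<Rightarrow> 'k::field)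
    \<Rightarrow> nat \<Rightarrow> ('b tree \<Rightarrow> 'k) \<Rightarrow> bool" where
  "R_min w one mult n x \<longleftrightarrow>
     R_max w one mult n x \<or>
     (\<exists>p q a1 a2 i. a1 \<in> Acomp w p \<and> a2 \<in> Acomp w q \<and> 1 \<le> q \<and> 1 \<le> i \<and> i \<le> p \<and>
        n = p + q + 1 \<and> x = lcomp i (genv w one a1) (genv w one a2))"

fun left_leaf :: "'b tree \<Rightarrow> bool" where
  "left_leaf Leaf = True"
| "left_leaf (Node b ts) = (ts \<noteq> [] \<and> hd ts = Leaf \<and> (\<forall>t\<in>set ts. left_leaf t))"

(* the cosets of the elements of S form a basis of V / I *)
definition coset_basis :: "('a \<Rightarrow> 'k::field) set \<Rightarrow> (('a \<Rightarrow> 'k) \<Rightarrow> bool) \<Rightarrow> 'a set \<Rightarrow> bool" where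
  "coset_basis V I S \<longleftrightarrow>
     (\<forall>x\<in>V. supp x \<subseteq> S \<longrightarrow> I x \<longrightarrow> x = (\<lambda>_. 0)) \<and>
     (\<forall>x\<in>V. \<exists>y\<in>V. supp y \<subseteq> S \<and> I (\<lambda>t. x t - y t))"

(* V / I is isomorphic to W, via a linear surjection V \<rightarrow> W with kernel I *)
definition quotient_iso :: "('a \<Rightarrow> 'k::field) set \<Rightarrow> (('a \<Rightarrow> 'k) \<Rightarrow> bool) \<Rightarrow> ('c \<Rightarrow> 'k) set \<Rightarrow> bool" where
  "quotient_iso V I W \<longleftrightarrow>
     (\<exists>\<phi>. (\<forall>x\<in>V. \<forall>y\<in>V. \<phi> (\<lambda>t. x t + y t) = (\<lambda>b. \<phi> x b + \<phi> y b)) \<and>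
          (\<forall>c. \<forall>x\<in>V. \<phi> (\<lambda>t. c * x t) = (\<lambda>b. c * \<phi> x b)) \<and>
          \<phi> ` V = W \<and>
          (\<forall>x\<in>V. \<phi> x = (\<lambda>_. 0) \<longleftrightarrow> I x))"

end

theory Submission
  imports Defs
begin

text \<open>Both envelopes are computed by rewriting tree monomials. In \<open>\<U>\<^sub>m\<^sub>a\<^sub>x(\<A>)\<close> the edge
  between a vertex and its leftmost input may be contracted using the product of \<open>\<A>\<close>; the
  normal forms of this rewriting are the trees whose vertices all have a leaf as leftmost input.
  Associativity of \<open>\<A>\<close> makes the normal form map well defined and compatible with grafting,
  so its linear extension vanishes on the ideal, while every tree differs from its normal form
  by an element of the ideal. In \<open>\<U>\<^sub>m\<^sub>i\<^sub>n(\<A>)\<close> compositions at non-leftmost inputs vanish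
  as well, so a tree evaluates to the product of the labels along its leftmost branch if all
  its other inputs are leaves, and to zero otherwise; this evaluation maps onto \<open>\<A>\<^sup>+\<close>
  with kernel the ideal.\<close>

section \<open>Linear extension from a basis\<close>

definition linext :: "('a \<Rightarrow> 'c \<Rightarrow> 'k::field) \<Rightarrow> ('a \<Rightarrow> 'k) \<Rightarrow> 'c \<Rightarrow> 'k" where
  "linext F x = (\<lambda>z. \<Sum>a\<in>supp x. x a * F a z)"

lemma supp_delta [simp]: "supp (delta a :: 'a \<Rightarrow> 'k::field) = {a}"
  by (auto simp: supp_def delta_def)

lemma supp_zero [simp]: "supp (\<lambda>_. 0) = {}"
  by (auto simp: supp_def)

lemma linext_eq_sum: "finite S \<Longrightarrow> supp x \<subseteq> S \<Longrightarrow> linext F x = (\<lambda>z. \<Sum>a\<in>S. x a * F a z)"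
  unfolding linext_def by (rule ext, rule sum.mono_neutral_left) (auto simp: supp_def)

lemma linext_apply: "linext F x z = (\<Sum>a\<in>supp x. x a * F a z)"
  by (simp add: linext_def)

lemma linext_delta [simp]: "linext F (delta a :: 'a \<Rightarrow> 'k::field) = F a"
  by (rule ext) (simp add: linext_def, simp add: delta_def)

lemma linext_zero [simp]: "linext F (\<lambda>_. 0) = (\<lambda>_. 0)"
  by (simp add: linext_def)

lemma linext_zero_fun [simp]: "linext (\<lambda>a _. 0) x = (\<lambda>_. 0)"
  by (simp add: linext_def)

lemma linext_cong: "(\<And>a. a \<in> supp x \<Longrightarrow> F a = G a) \<Longrightarrow> linext F x = linext G x"
  by (auto simp: linext_def intro!: sum.cong)

lemma supp_linext: "supp (linext F x) \<subseteq> (\<Union>a\<in>supp x. supp (F a))"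
proof
  fix z assume "z \<in> supp (linext F x)"
  then have "(\<Sum>a\<in>supp x. x a * F a z) \<noteq> 0" by (simp add: supp_def linext_def)
  then obtain a where "a \<in> supp x" "x a * F a z \<noteq> 0" by (meson sum.neutral)
  then show "z \<in> (\<Union>a\<in>supp x. supp (F a))" by (auto simp: supp_def)
qed

lemma finite_supp_linext:
  "finite (supp x) \<Longrightarrow> (\<And>a. a \<in> supp x \<Longrightarrow> finite (supp (F a))) \<Longrightarrow> finite (supp (linext F x))"
  by (rule finite_subset[OF supp_linext]) auto

lemma linext_add:
  assumes "finite (supp x)" and "finite (supp y)"
  shows "linext F (\<lambda>z. x z + y z) = (\<lambda>z. linext F x z + linext F y z)"
proof -
  let ?S = "supp x \<union> supp y"
  have "supp (\<lambda>z. x z + y z) \<subseteq> ?S" by (auto simp: supp_def)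
  then show ?thesis
    by (simp add: linext_eq_sum[of ?S] assms distrib_right sum.distrib)
qed

lemma linext_diff:
  assumes "finite (supp x)" and "finite (supp y)"
  shows "linext F (\<lambda>z. x z - y z) = (\<lambda>z. linext F x z - linext F y z)"
proof -
  let ?S = "supp x \<union> supp y"
  have "supp (\<lambda>z. x z - y z) \<subseteq> ?S" by (auto simp: supp_def)
  then show ?thesis
    by (simp add: linext_eq_sum[of ?S] assms left_diff_distrib sum_subtractf)
qed

lemma linext_smult: "linext F (\<lambda>z. c * x z) = (\<lambda>z. c * linext F x z)"
proof (cases "c = 0")
  case True
  then show ?thesis by (simp add: linext_def)
next
  case False
  then have "supp (\<lambda>z. c * x z) = supp x" by (auto simp: supp_def)
  then show ?thesis by (simp add: linext_def sum_distrib_left mult.assoc fun_eq_iff)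
qed

lemma linext_diff_fun: "linext (\<lambda>a z. F a z - G a z) x = (\<lambda>z. linext F x z - linext G x z)"
  by (simp add: linext_def right_diff_distrib sum_subtractf)

lemma linext_swap:
  "finite (supp x) \<Longrightarrow> finite (supp y) \<Longrightarrow>
   linext (\<lambda>a. linext (H a) y) x = linext (\<lambda>b. linext (\<lambda>a. H a b) x) y"
  by (rule ext) (simp add: linext_def sum_distrib_left sum.swap[of _ "supp x"] algebra_simps)

lemma linext_linext:
  assumes fx: "finite (supp x)" and fG: "\<And>a. a \<in> supp x \<Longrightarrow> finite (supp (G a))"
  shows "linext F (linext G x) = linext (\<lambda>a. linext F (G a)) x"
proof (rule ext)
  fix z
  let ?S = "\<Union>a\<in>supp x. supp (G a)"
  have fS: "finite ?S" using fx fG by auto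
  have "linext F (linext G x) z = (\<Sum>b\<in>?S. linext G x b * F b z)"
    by (simp add: linext_eq_sum[OF fS supp_linext])
  also have "\<dots> = (\<Sum>b\<in>?S. \<Sum>a\<in>supp x. x a * G a b * F b z)"
    by (simp add: linext_def sum_distrib_right)
  also have "\<dots> = (\<Sum>a\<in>supp x. x a * (\<Sum>b\<in>?S. G a b * F b z))"
    by (subst sum.swap) (simp add: sum_distrib_left mult.assoc)
  also have "\<dots> = (\<Sum>a\<in>supp x. x a * linext F (G a) z)"
  proof (rule sum.cong[OF refl])
    fix a assume "a \<in> supp x"
    then have "supp (G a) \<subseteq> ?S" by auto
    then show "x a * (\<Sum>b\<in>?S. G a b * F b z) = x a * linext F (G a) z"
      by (simp add: linext_eq_sum[OF fS])
  qed
  finally show "linext F (linext G x) z = linext (\<lambda>a. linext F (G a)) x z"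
    by (simp add: linext_def)
qed

lemma linext_delta_id: "finite (supp x) \<Longrightarrow> linext delta x = x"
proof (rule ext)
  fix z assume f: "finite (supp x)"
  show "linext delta x z = x z"
  proof (cases "z \<in> supp x")
    case True
    have "(\<Sum>a\<in>supp x. x a * delta a z) = (\<Sum>a\<in>supp x. if a = z then x z else 0)"
      by (rule sum.cong) (auto simp: delta_def)
    then show ?thesis using True f by (simp add: linext_def)
  next
    case False
    then show ?thesis by (auto simp: linext_def delta_def supp_def intro!: sum.neutral)
  qed
qed

lemma linext_delta_inj_apply:
  assumes "inj f" and "finite (supp y)"
  shows "linext (\<lambda>a. delta (f a)) y (f a) = (y a :: 'k::field)"
proof -
  have "linext (\<lambda>a. delta (f a)) y (f a) = (\<Sum>b\<in>supp y. if a = b then y b else 0)"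
    unfolding linext_apply by (rule sum.cong) (auto simp: delta_def inj_eq[OF assms(1)])
  also have "\<dots> = y a"
    using assms(2) by (cases "a \<in> supp y") (auto simp: supp_def)
  finally show ?thesis .
qed

lemma linext_delta_notin_range:
  "z \<notin> range f \<Longrightarrow> linext (\<lambda>a. delta (f a)) y z = (0 :: 'k::field)"
  unfolding linext_apply by (rule sum.neutral) (auto simp: delta_def)

fun tensor :: "('a \<Rightarrow> 'k::field) list \<Rightarrow> 'a list \<Rightarrow> 'k" where
  "tensor [] = (\<lambda>l. if l = [] then 1 else 0)"
| "tensor (X # Xs) = (\<lambda>l. case l of [] \<Rightarrow> 0 | a # as \<Rightarrow> X a * tensor Xs as)"

lemma tensor_Nil: "tensor [] = delta []"
  by (simp add: delta_def fun_eq_iff)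

declare tensor.simps(1) [simp del]

lemma supp_tensor_Cons:
  "supp (tensor (X # Xs)) \<subseteq> (\<lambda>(a, as). a # as) ` (supp X \<times> supp (tensor Xs))"
proof
  fix l assume "l \<in> supp (tensor (X # Xs))"
  then show "l \<in> (\<lambda>(a, as). a # as) ` (supp X \<times> supp (tensor Xs))"
    by (cases l) (auto simp: supp_def)
qed

lemma finite_supp_tensor:
  "(\<And>X. X \<in> set Xs \<Longrightarrow> finite (supp X)) \<Longrightarrow> finite (supp (tensor Xs))"
proof (induction Xs)
  case Nil
  then show ?case by (simp add: tensor_Nil)
next
  case (Cons X Xs)
  then show ?case by (intro finite_subset[OF supp_tensor_Cons]) auto
qed

lemma supp_tensor: "l \<in> supp (tensor Xs) \<Longrightarrow> list_all2 (\<lambda>a X. a \<in> supp X) l Xs"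
proof (induction Xs arbitrary: l)
  case Nil
  then show ?case by (simp add: supp_def tensor.simps(1) split: if_splits)
next
  case (Cons X Xs)
  then show ?case by (cases l) (auto simp: supp_def)
qed

lemma tensor_delta: "tensor (map delta ls) = (delta ls :: 'a list \<Rightarrow> 'k::field)"
proof (induction ls)
  case Nil
  then show ?case by (simp add: tensor_Nil)
next
  case (Cons a ls)
  then show ?case by (auto simp: delta_def fun_eq_iff split: list.splits)
qed

lemma tensor_linext: "tensor (A @ linext G V # B) = linext (\<lambda>t. tensor (A @ G t # B)) V"
proof (induction A)
  case Nil
  show ?case
    by (rule ext) (auto simp: linext_def sum_distrib_right sum_distrib_left algebra_simps
        split: list.splits)
next
  case (Cons X A)
  show ?case
    by (simp only: append_Cons tensor.simps(2) Cons.IH)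
      (rule ext, auto simp: linext_def sum_distrib_left algebra_simps split: list.splits)
qed

lemma tensor_Cons:
  assumes fX: "finite (supp X)" and fP: "finite (supp (tensor Xs))"
  shows "tensor (X # Xs) = linext (\<lambda>a. linext (\<lambda>as. delta (a # as)) (tensor Xs)) (X :: 'a \<Rightarrow> 'k::field)"
proof (rule ext)
  fix l
  show "tensor (X # Xs) l = linext (\<lambda>a. linext (\<lambda>as. delta (a # as)) (tensor Xs)) X l"
  proof (cases l)
    case Nil
    then show ?thesis by (simp add: linext_apply delta_def)
  next
    case (Cons a0 as0)
    have "X a * linext (\<lambda>as. delta (a # as)) (tensor Xs) l
          = (if a0 = a then X a * tensor Xs as0 else 0)" for a
      using Cons fP linext_delta_inj_apply[of "\<lambda>as. a # as" "tensor Xs" as0]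
        linext_delta_notin_range[of l "\<lambda>as. a # as" "tensor Xs"]
      by (cases "a = a0") (auto simp: inj_def)
    then have "linext (\<lambda>a. linext (\<lambda>as. delta (a # as)) (tensor Xs)) X l
        = (\<Sum>a\<in>supp X. if a0 = a then X a * tensor Xs as0 else 0)"
      by (simp add: linext_apply[of _ X])
    also have "\<dots> = X a0 * tensor Xs as0"
      using fX by (cases "a0 \<in> supp X") (auto simp: supp_def)
    finally show ?thesis using Cons by simp
  qed
qed

lemma tensor_append:
  assumes "\<And>X. X \<in> set A \<Longrightarrow> finite (supp X)" and fB: "\<And>X. X \<in> set B \<Longrightarrow> finite (supp X)"
  shows "tensor (A @ B) = linext (\<lambda>vs. linext (\<lambda>ws. delta (vs @ ws)) (tensor B)) (tensor A :: 'a list \<Rightarrow> 'k::field)"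
  using assms(1)
proof (induction A)
  case Nil
  then show ?case using fB by (simp add: tensor_Nil linext_delta_id finite_supp_tensor)
next
  case (Cons X A)
  have fA: "finite (supp (tensor A))" using Cons.prems by (intro finite_supp_tensor) auto
  have fB': "finite (supp (tensor B))" using fB by (intro finite_supp_tensor) auto
  have fX: "finite (supp X)" using Cons.prems by auto
  have fAB: "finite (supp (tensor (A @ B)))" using Cons.prems fB by (intro finite_supp_tensor) auto
  have "tensor ((X # A) @ B) = linext (\<lambda>a. linext (\<lambda>as. delta (a # as)) (tensor (A @ B))) X"
    using tensor_Cons[OF fX fAB] by simp
  also have "\<dots> = linext (\<lambda>a. linext (\<lambda>vs. linext (\<lambda>ws. delta (a # vs @ ws)) (tensor B)) (tensor A)) X"
    using Cons by (simp add: linext_linext fA fB' finite_supp_linext)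
  also have "\<dots> = linext (\<lambda>vs. linext (\<lambda>ws. delta (vs @ ws)) (tensor B)) (tensor (X # A))"
    by (simp only: tensor_Cons[OF fX fA]) (simp add: linext_linext fX fA finite_supp_linext)
  finally show ?case .
qed

lemma graft_list_append_left:
  "i < sum_list (map ar xs) \<Longrightarrow> graft_list i (xs @ ys) u = graft_list i xs u @ ys"
  by (induction xs arbitrary: i) auto

lemma graft_list_append_right:
  "sum_list (map ar xs) \<le> i \<Longrightarrow>
   graft_list i (xs @ ys) u = xs @ graft_list (i - sum_list (map ar xs)) ys u"
  by (induction xs arbitrary: i) (auto simp: diff_diff_add)

lemma graft_list_at_Leaf:
  "graft_list (sum_list (map ar pre)) (pre @ Leaf # post) u = pre @ u # post"
  by (simp add: graft_list_append_right)

lemma graft_list_at: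
  "j < ar t \<Longrightarrow> graft_list (sum_list (map ar pre) + j) (pre @ t # post) u = pre @ graft j t u # post"
  by (simp add: graft_list_append_right)

lemma graft_position_split:
  "i < sum_list (map ar ts) \<Longrightarrow>
   \<exists>pre t post j. ts = pre @ t # post \<and> j < ar t \<and> i = sum_list (map ar pre) + j"
proof (induction ts arbitrary: i)
  case Nil
  then show ?case by simp
next
  case (Cons t ts)
  show ?case
  proof (cases "i < ar t")
    case True
    then show ?thesis by (rule_tac x="[]" in exI) auto
  next
    case False
    then have "i - ar t < sum_list (map ar ts)" using Cons.prems by auto
    from Cons.IH[OF this] obtain pre t' post j where
      "ts = pre @ t' # post" "j < ar t'" "i - ar t = sum_list (map ar pre) + j" by blast
    then show ?thesis using False by (rule_tac x="t # pre" in exI) auto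
  qed
qed

lemma graft_Leaf_right [simp]: "u = Leaf \<Longrightarrow> graft i s u = s"
  and graft_list_Leaf_right [simp]: "u = Leaf \<Longrightarrow> graft_list i ts u = ts"
  by (induction i s u and i ts u rule: graft_graft_list.induct) auto

lemma length_graft_list [simp]: "length (graft_list i ts u) = length ts"
  by (induction ts arbitrary: i) auto

lemma ar_graft: "i < ar s \<Longrightarrow> ar (graft i s u) + 1 = ar s + ar u"
  and ar_graft_list: "i < sum_list (map ar ts) \<Longrightarrow>
     sum_list (map ar (graft_list i ts u)) + 1 = sum_list (map ar ts) + ar u"
  by (induction i s u and i ts u rule: graft_graft_list.induct) (auto split: if_splits)

lemma graft_not_Leaf: "u \<noteq> Leaf \<Longrightarrow> i < ar s \<Longrightarrow> graft i s u \<noteq> Leaf"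
  by (cases s) auto

lemma graft_list_not_all_Leaf:
  assumes u: "u \<noteq> Leaf" and j: "j < sum_list (map ar cs)"
  shows "\<exists>c\<in>set (graft_list j cs u). c \<noteq> Leaf"
proof -
  from graft_position_split[OF j] obtain pre t post k
    where "cs = pre @ t # post" "k < ar t" "j = sum_list (map ar pre) + k"
    by blast
  then show ?thesis using graft_not_Leaf[OF u] by (auto simp: graft_list_at)
qed

lemma sum_ar_all_Leaf: "\<forall>t\<in>set xs. t = Leaf \<Longrightarrow> sum_list (map ar xs) = length xs"
  by (induction xs) auto

lemma all_Leaf_eq_replicate: "\<forall>t\<in>set xs. t = Leaf \<Longrightarrow> xs = replicate (length xs) Leaf"
  by (induction xs) auto

lemma split_list_nonLeaf: "\<exists>t\<in>set xs. t \<noteq> Leaf \<Longrightarrow> \<exists>pre z post. xs = pre @ z # post \<and> z \<noteq> Leaf"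
  by (metis split_list)

fun nodes :: "'b tree \<Rightarrow> nat" where
  "nodes Leaf = 0"
| "nodes (Node b ts) = Suc (sum_list (map nodes ts))"

lemma nodes_pos: "z \<noteq> Leaf \<Longrightarrow> 0 < nodes z"
  by (cases z) auto

lemma lcomp_eq_linext: "lcomp i x y = linext (\<lambda>s. linext (\<lambda>u. delta (graft i s u)) y) x"
  by (rule ext) (auto simp: lcomp_def linext_def delta_def sum_distrib_left intro!: sum.cong)

lemma lcomp_delta: "lcomp i (delta s) (delta u) = delta (graft i s u)"
  by (simp add: lcomp_eq_linext)

lemma finite_supp_lcomp:
  "finite (supp x) \<Longrightarrow> finite (supp y) \<Longrightarrow> finite (supp (lcomp i x (y :: _ \<Rightarrow> 'k::field)))"
  by (simp add: lcomp_eq_linext finite_supp_linext)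

lemma linext_lcomp:
  "finite (supp x) \<Longrightarrow> finite (supp y) \<Longrightarrow>
   linext F (lcomp i x y) = linext (\<lambda>s. linext (\<lambda>u. F (graft i s u)) y) x"
  by (simp add: lcomp_eq_linext linext_linext finite_supp_linext)

lemma lcomp_diff_left:
  "finite (supp x) \<Longrightarrow> finite (supp x') \<Longrightarrow>
   lcomp k (\<lambda>t. x t - x' t) y = (\<lambda>t. lcomp k x y t - lcomp k x' (y :: _ \<Rightarrow> 'k::field) t)"
  by (simp add: lcomp_eq_linext linext_diff)

lemma lcomp_diff_right:
  "finite (supp y) \<Longrightarrow> finite (supp y') \<Longrightarrow>
   lcomp k x (\<lambda>t. y t - y' t) = (\<lambda>t. lcomp k x y t - lcomp k x (y' :: _ \<Rightarrow> 'k::field) t)"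
  by (simp add: lcomp_eq_linext linext_diff linext_diff_fun)

lemma genv_eq_linext: "genv w one f = linext (\<lambda>b. delta (gen w one b)) f"
  by (rule ext) (simp add: genv_def linext_def)

lemma finite_supp_genv: "finite (supp a) \<Longrightarrow> finite (supp (genv w one a :: 'b tree \<Rightarrow> 'k::field))"
  by (simp add: genv_eq_linext finite_supp_linext)

lemma genv_linext:
  "finite (supp m) \<Longrightarrow> (\<And>d. finite (supp (F d))) \<Longrightarrow>
   genv w one (linext F m) = linext (\<lambda>d. genv w one (F d)) (m :: _ \<Rightarrow> 'k::field)"
  by (simp add: genv_eq_linext linext_linext)

lemma mulv_eq_linext: "mulv mult f g = linext (\<lambda>a. linext (\<lambda>b. mult a b) g) f"
  by (rule ext) (simp add: mulv_def linext_def sum_distrib_left mult.assoc)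

lemma finite_supp_Acomp: "a \<in> Acomp w p \<Longrightarrow> finite (supp a)"
  by (simp add: Acomp_def)

lemma sum_list_ge_length: "(\<And>t. t \<in> set ts \<Longrightarrow> 1 \<le> f t) \<Longrightarrow> length ts \<le> sum_list (map f ts)"
  by (induction ts) (auto, fastforce)

section \<open>Tree monomials over a weight graded algebra\<close>

locale weight_graded =
  fixes w :: "'b \<Rightarrow> nat" and one :: 'b and mult :: "'b \<Rightarrow> 'b \<Rightarrow> 'b \<Rightarrow> 'k::field"
  assumes wg_algebra: "wg_algebra w one mult"
begin

abbreviation wf :: "'b tree \<Rightarrow> bool" where "wf \<equiv> wf_tree w one"
abbreviation T :: "nat \<Rightarrow> ('b tree \<Rightarrow> 'k) set" where "T \<equiv> Tcomp w one"

lemma finite_supp_mult [simp]: "finite (supp (mult a b))"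
  using wg_algebra by (simp add: wg_algebra_def)

lemma weight_mult: "z \<in> supp (mult a b) \<Longrightarrow> w z = w a + w b"
  using wg_algebra by (auto simp: wg_algebra_def supp_def)

lemma weight_eq_0_iff: "w b = 0 \<longleftrightarrow> b = one"
  using wg_algebra by (simp add: wg_algebra_def)

lemma mult_one_left [simp]: "mult one b = delta b"
  and mult_one_right [simp]: "mult b one = delta b"
  using wg_algebra by (simp_all add: wg_algebra_def)

lemma mult_assoc: "linext (\<lambda>d. mult d c) (mult a b) = linext (mult a) (mult b c)"
  using wg_algebra by (simp add: wg_algebra_def mulv_eq_linext)

lemma supp_mult_not_one: "b \<noteq> one \<Longrightarrow> d \<in> supp (mult b c) \<Longrightarrow> d \<noteq> one"
  by (metis add_is_0 weight_mult weight_eq_0_iff)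

lemma finite_supp_mulv: "finite (supp a1) \<Longrightarrow> finite (supp a2) \<Longrightarrow> finite (supp (mulv mult a1 a2))"
  by (simp add: mulv_eq_linext finite_supp_linext)

lemma ar_pos: "wf t \<Longrightarrow> 1 \<le> ar t"
proof (induction t)
  case Leaf
  then show ?case by simp
next
  case (Node b ts)
  then have "length ts \<le> sum_list (map ar ts)" by (intro sum_list_ge_length) auto
  then show ?case using Node.prems by simp
qed

lemma ar_Node_ge_2: "wf (Node b ts) \<Longrightarrow> 2 \<le> ar (Node b ts)"
proof -
  assume h: "wf (Node b ts)"
  then have "length ts \<le> sum_list (map ar ts)" by (intro sum_list_ge_length ar_pos) auto
  moreover have "w b \<noteq> 0" using h weight_eq_0_iff by auto
  ultimately show ?thesis using h by simp
qed

lemma ar_eq_1_iff: "wf t \<Longrightarrow> ar t = 1 \<longleftrightarrow> t = Leaf"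
  using ar_Node_ge_2 by (cases t) fastforce+

lemma wf_graft: "wf s \<Longrightarrow> wf u \<Longrightarrow> wf (graft i s u)"
  and wf_graft_list: "\<forall>t\<in>set ts. wf t \<Longrightarrow> wf u \<Longrightarrow> \<forall>t\<in>set (graft_list i ts u). wf t"
  by (induction i s u and i ts u rule: graft_graft_list.induct) auto

lemma wf_gen: "wf (gen w one b)"
  by (simp add: gen_def)

lemma ar_gen: "ar (gen w one b) = Suc (w b)"
  using weight_eq_0_iff by (auto simp: gen_def sum_list_replicate)

lemma gen_eq_corolla: "b \<noteq> one \<Longrightarrow> gen w one b = Node b (replicate (Suc (w b)) Leaf)"
  by (simp add: gen_def)

lemma Tcomp_iff: "x \<in> T n \<longleftrightarrow> finite (supp x) \<and> (\<forall>t\<in>supp x. wf t \<and> ar t = n)"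
  by (simp add: Tcomp_def)

lemma finite_supp_Tcomp: "x \<in> T n \<Longrightarrow> finite (supp x)"
  by (simp add: Tcomp_iff)

lemma delta_Tcomp: "wf t \<Longrightarrow> delta t \<in> T (ar t)"
  by (simp add: Tcomp_iff)

lemma zero_Tcomp: "(\<lambda>_. 0) \<in> T n"
  by (simp add: Tcomp_iff)

lemma Tcomp_0: "T 0 = {\<lambda>_. 0}"
  using ar_pos by (fastforce simp: Tcomp_iff supp_def)

lemma linext_Tcomp:
  "finite (supp x) \<Longrightarrow> (\<And>a. a \<in> supp x \<Longrightarrow> F a \<in> T n) \<Longrightarrow> linext F x \<in> T n"
  using supp_linext[of F x] by (auto simp: Tcomp_iff intro!: finite_supp_linext)

lemma add_Tcomp: "x \<in> T n \<Longrightarrow> y \<in> T n \<Longrightarrow> (\<lambda>t. x t + y t) \<in> T n"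
proof -
  have "supp (\<lambda>t. x t + y t) \<subseteq> supp x \<union> supp y" by (auto simp: supp_def)
  then show "x \<in> T n \<Longrightarrow> y \<in> T n \<Longrightarrow> (\<lambda>t. x t + y t) \<in> T n"
    by (auto simp: Tcomp_iff intro: finite_subset)
qed

lemma smult_Tcomp: "x \<in> T n \<Longrightarrow> (\<lambda>t. c * x t) \<in> T n"
proof -
  have "supp (\<lambda>t. c * x t) \<subseteq> supp x" by (auto simp: supp_def)
  then show "x \<in> T n \<Longrightarrow> (\<lambda>t. c * x t) \<in> T n"
    by (auto simp: Tcomp_iff intro: finite_subset)
qed

lemma lcomp_Tcomp:
  assumes x: "x \<in> T n" and y: "y \<in> T m" and i: "i < n"
  shows "lcomp i x y \<in> T (n + m - 1)"
  unfolding lcomp_eq_linext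
proof (intro linext_Tcomp)
  fix s u assume "s \<in> supp x" "u \<in> supp y"
  then have "wf s" "ar s = n" "wf u" "ar u = m" using x y by (auto simp: Tcomp_iff)
  then show "delta (graft i s u) \<in> T (n + m - 1)"
    using delta_Tcomp[OF wf_graft] ar_graft[of i s u] i by (metis add_diff_cancel_right')
qed (use x y in \<open>auto simp: Tcomp_iff\<close>)

lemma genv_Tcomp: "a \<in> Acomp w p \<Longrightarrow> genv w one a \<in> T (Suc p)"
  unfolding genv_eq_linext
  by (rule linext_Tcomp) (auto simp: Acomp_def ar_gen intro: delta_Tcomp[OF wf_gen, simplified ar_gen])

abbreviation I :: "(nat \<Rightarrow> ('b tree \<Rightarrow> 'k) \<Rightarrow> bool) \<Rightarrow> nat \<Rightarrow> ('b tree \<Rightarrow> 'k) \<Rightarrow> bool"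
  where "I \<equiv> op_ideal w one"

lemma op_ideal_Tcomp: "I R n x \<Longrightarrow> x \<in> T n"
proof (induction rule: op_ideal.induct)
  case (left n x y m i)
  then show ?case using lcomp_Tcomp by blast
next
  case (right m x y n i)
  then show ?case using lcomp_Tcomp by blast
qed (auto intro: zero_Tcomp add_Tcomp smult_Tcomp)

lemma op_ideal_linext:
  assumes "finite (supp x)" and "\<And>a. a \<in> supp x \<Longrightarrow> I R n (F a)"
  shows "I R n (linext F x)"
proof -
  have "I R n (\<lambda>z. \<Sum>a\<in>S. x a * F a z)" if "finite S" "S \<subseteq> supp x" for S
    using that
  proof (induction S rule: finite_induct)
    case empty
    then show ?case by (simp add: op_ideal.zero)
  next
    case (insert b S)
    then have "I R n (\<lambda>t. (\<lambda>z. x b * F b z) t + (\<lambda>z. \<Sum>a\<in>S. x a * F a z) t)"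
      using assms(2) by (intro op_ideal.add op_ideal.smult) auto
    then show ?case using insert by simp
  qed
  then show ?thesis using assms(1) by (simp add: linext_def)
qed

lemma op_ideal_mono: "I R n x \<Longrightarrow> (\<And>n x. R n x \<Longrightarrow> R' n x) \<Longrightarrow> I R' n x"
  by (induction rule: op_ideal.induct) (auto intro: op_ideal.intros simp del: One_nat_def)

section \<open>Normal forms in the max-envelope\<close>

text \<open>Normal forms modulo the relations of \<open>\<U>\<^sub>m\<^sub>a\<^sub>x\<close>: the leftmost edge below a vertex
  is contracted using the product of \<open>\<A>\<close> until every leftmost input is a leaf.
  \<open>nf_root b s0 vs\<close> is the normal form of \<open>Node b (s0 # vs)\<close> when \<open>s0\<close> and \<open>vs\<close> are
  already normal; its junk cases never occur in that situation.\<close>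

fun nf_root :: "'b \<Rightarrow> 'b tree \<Rightarrow> 'b tree list \<Rightarrow> 'b tree \<Rightarrow> 'k" where
  "nf_root b Leaf vs = delta (Node b (Leaf # vs))"
| "nf_root b (Node c (Leaf # us)) vs = linext (\<lambda>d. delta (Node d (Leaf # us @ vs))) (mult b c)"
| "nf_root b (Node c []) vs = (\<lambda>_. 0)"
| "nf_root b (Node c (Node e l # us)) vs = (\<lambda>_. 0)"

definition nf_node :: "'b \<Rightarrow> ('b tree \<Rightarrow> 'k) \<Rightarrow> ('b tree list \<Rightarrow> 'k) \<Rightarrow> 'b tree \<Rightarrow> 'k" where
  "nf_node b X P = linext (\<lambda>s0. linext (nf_root b s0) P) X"

fun nf :: "'b tree \<Rightarrow> 'b tree \<Rightarrow> 'k" where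
  "nf Leaf = delta Leaf"
| "nf (Node b []) = (\<lambda>_. 0)"
| "nf (Node b (x # cs)) = nf_node b (nf x) (tensor (map nf cs))"

lemma finite_supp_nf_root [simp]: "finite (supp (nf_root b s vs))"
  by (induction b s vs rule: nf_root.induct) (auto intro!: finite_supp_linext)

lemma finite_supp_nf [simp]: "finite (supp (nf t))"
  by (induction t rule: nf.induct)
    (auto simp: nf_node_def intro!: finite_supp_linext finite_supp_tensor)

lemma supp_nf_root:
  "t \<in> supp (nf_root b s0 vs) \<Longrightarrow>
   (s0 = Leaf \<and> t = Node b (Leaf # vs)) \<or>
   (\<exists>c us d. s0 = Node c (Leaf # us) \<and> d \<in> supp (mult b c) \<and> t = Node d (Leaf # us @ vs))"
proof (induction b s0 vs rule: nf_root.induct)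
  case (2 b c us vs)
  then show ?case using supp_linext[of "\<lambda>d. delta (Node d (Leaf # us @ vs))" "mult b c"] by auto
qed (auto simp: supp_def delta_def split: if_splits)

lemma supp_nf_Node:
  assumes "t \<in> supp (nf (Node b (x # cs)))"
  obtains s0 vs where "s0 \<in> supp (nf x)" and "list_all2 (\<lambda>v c. v \<in> supp (nf c)) vs cs"
    and "t \<in> supp (nf_root b s0 vs)"
proof -
  from assms obtain s0 where s0: "s0 \<in> supp (nf x)"
    and "t \<in> supp (linext (nf_root b s0) (tensor (map nf cs)))"
    using supp_linext by (fastforce simp: nf_node_def)
  then obtain vs where "vs \<in> supp (tensor (map nf cs))" "t \<in> supp (nf_root b s0 vs)"
    using supp_linext by fast
  then show ?thesis
    using that s0 supp_tensor by (fastforce simp: list_all2_map2)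
qed

lemma left_leaf_nf_root:
  "left_leaf s0 \<Longrightarrow> \<forall>v\<in>set vs. left_leaf v \<Longrightarrow> t \<in> supp (nf_root b s0 vs) \<Longrightarrow> left_leaf t"
  by (drule supp_nf_root) auto

lemma wf_nf_root:
  assumes "wf (Node b (s0 # vs))" and "t \<in> supp (nf_root b s0 vs)"
  shows "wf t \<and> ar t = ar (Node b (s0 # vs))"
  using supp_nf_root[OF assms(2)]
proof (elim disjE exE conjE)
  fix c us d
  assume s0: "s0 = Node c (Leaf # us)" and d: "d \<in> supp (mult b c)"
    and t: "t = Node d (Leaf # us @ vs)"
  have "d \<noteq> one" using supp_mult_not_one[OF _ d] assms(1) by simp
  then show ?thesis using assms(1) weight_mult[OF d] by (auto simp: s0 t)
qed (use assms(1) in simp)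

lemma list_all2_set_left: "list_all2 Q vs cs \<Longrightarrow> v \<in> set vs \<Longrightarrow> \<exists>c\<in>set cs. Q v c"
  by (induction rule: list_all2_induct) auto

lemma list_all2_sum_ar:
  "list_all2 (\<lambda>v c. ar v = ar c) vs cs \<Longrightarrow> sum_list (map ar vs) = sum_list (map ar cs)"
  by (induction rule: list_all2_induct) auto

lemma list_all2_supp_nf:
  assumes "list_all2 (\<lambda>v c. v \<in> supp (nf c)) vs cs"
    and "\<And>v c. c \<in> set cs \<Longrightarrow> v \<in> supp (nf c) \<Longrightarrow> P v c"
  shows "list_all2 P vs cs"
  using assms by (induction rule: list_all2_induct) auto

lemma left_leaf_nf: "s \<in> supp (nf t) \<Longrightarrow> left_leaf s"
proof (induction t arbitrary: s rule: nf.induct)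
  case (3 b x cs)
  then obtain s0 vs where "s0 \<in> supp (nf x)" "list_all2 (\<lambda>v c. v \<in> supp (nf c)) vs cs"
    "s \<in> supp (nf_root b s0 vs)"
    by (elim supp_nf_Node)
  moreover have "list_all2 (\<lambda>v c. left_leaf v) vs cs"
    using list_all2_supp_nf[OF \<open>list_all2 _ vs cs\<close> "3.IH"(2)] .
  ultimately show ?case
    using "3.IH"(1) left_leaf_nf_root by (blast dest: list_all2_set_left)
qed auto

lemma nf_left_leaf: "left_leaf t \<Longrightarrow> nf t = delta t"
proof (induction t rule: nf.induct)
  case (3 b x cs)
  then have "x = Leaf" "map nf cs = map delta cs" by auto
  then have "nf (Node b (x # cs)) = nf_node b (delta Leaf) (delta cs)"
    by (simp only: nf.simps tensor_delta)
  then show ?case using \<open>x = Leaf\<close> by (simp add: nf_node_def)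
qed auto

lemma wf_nf: "wf t \<Longrightarrow> s \<in> supp (nf t) \<Longrightarrow> wf s \<and> ar s = ar t"
proof (induction t arbitrary: s rule: nf.induct)
  case (3 b x cs)
  then obtain s0 vs where s0: "s0 \<in> supp (nf x)" and vs: "list_all2 (\<lambda>v c. v \<in> supp (nf c)) vs cs"
    and s: "s \<in> supp (nf_root b s0 vs)"
    by (elim supp_nf_Node)
  have vs': "list_all2 (\<lambda>v c. wf v \<and> ar v = ar c) vs cs"
    using list_all2_supp_nf[OF vs] "3.IH"(2) "3.prems"(1) by simp
  then have "length vs = length cs" "\<forall>v\<in>set vs. wf v"
    "sum_list (map ar vs) = sum_list (map ar cs)"
    by (auto simp: list_all2_lengthD dest: list_all2_set_left
        intro: list_all2_sum_ar list_all2_mono[OF vs'])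
  moreover have "wf s0" "ar s0 = ar x" using "3.IH"(1) "3.prems"(1) s0 by auto
  ultimately have "wf (Node b (s0 # vs))" "ar (Node b (s0 # vs)) = ar (Node b (x # cs))"
    using "3.prems"(1) by auto
  then show ?case using wf_nf_root[OF _ s] by simp
qed auto

lemma nf_node_linext_left:
  "finite (supp V) \<Longrightarrow> (\<And>d. finite (supp (F d))) \<Longrightarrow>
   nf_node b (linext F V) P = linext (\<lambda>d. nf_node b (F d) P) V"
  unfolding nf_node_def by (simp add: linext_linext)

lemma nf_node_linext_right:
  assumes fX: "finite (supp X)" and fV: "finite (supp V)" and fF: "\<And>d. finite (supp (F d))"
  shows "nf_node b X (linext F V) = linext (\<lambda>d. nf_node b X (F d)) V"
proof -
  have "nf_node b X (linext F V) = linext (\<lambda>s0. linext (\<lambda>d. linext (nf_root b s0) (F d)) V) X"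
    unfolding nf_node_def by (simp add: linext_linext fV fF)
  also have "\<dots> = linext (\<lambda>d. linext (\<lambda>s0. linext (nf_root b s0) (F d)) X) V"
    by (rule linext_swap[OF fX fV])
  finally show ?thesis by (simp add: nf_node_def)
qed

lemma nf_node_nf_root:
  assumes "left_leaf x0" and fP: "finite (supp P)"
  shows "nf_node b (nf_root c x0 us) P = linext (\<lambda>d. linext (\<lambda>vs. nf_root d x0 (us @ vs)) P) (mult b c)"
proof (cases x0)
  case Leaf
  have "nf_node b (nf_root c x0 us) P
      = linext (\<lambda>vs. linext (\<lambda>d. delta (Node d (Leaf # us @ vs))) (mult b c)) P"
    using Leaf by (simp add: nf_node_def) (rule linext_cong, simp)
  also have "\<dots> = linext (\<lambda>d. linext (\<lambda>vs. delta (Node d (Leaf # us @ vs))) P) (mult b c)"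
    by (rule linext_swap[OF fP finite_supp_mult])
  finally show ?thesis using Leaf by simp
next
  case (Node e ts)
  with \<open>left_leaf x0\<close> obtain ps where x0: "x0 = Node e (Leaf # ps)" by (cases ts) auto
  define D where "D = (\<lambda>vs g. delta (Node g (Leaf # ps @ us @ vs)) :: 'b tree \<Rightarrow> 'k)"
  have "nf_node b (nf_root c x0 us) P
      = linext (\<lambda>f. nf_node b (delta (Node f (Leaf # ps @ us))) P) (mult c e)"
    unfolding x0 nf_root.simps by (rule nf_node_linext_left) auto
  also have "\<dots> = linext (\<lambda>f. linext (\<lambda>vs. linext (D vs) (mult b f)) P) (mult c e)"
    by (simp add: nf_node_def D_def) (rule linext_cong, rule linext_cong, simp)
  also have "\<dots> = linext (\<lambda>vs. linext (D vs) (linext (mult b) (mult c e))) P"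
    by (simp add: linext_swap[OF finite_supp_mult fP] linext_linext)
  also have "\<dots> = linext (\<lambda>vs. linext (D vs) (linext (\<lambda>d. mult d e) (mult b c))) P"
    by (simp add: mult_assoc)
  also have "\<dots> = linext (\<lambda>d. linext (\<lambda>vs. linext (D vs) (mult d e)) P) (mult b c)"
    by (simp add: linext_linext linext_swap[OF fP finite_supp_mult])
  finally show ?thesis by (simp add: x0 D_def)
qed

lemma nf_contract_root:
  "nf (Node b (Node c (x # us) # cs)) = linext (\<lambda>d. nf (Node d (x # us @ cs))) (mult b c)"
proof -
  define X where "X = nf x"
  define PU where "PU = tensor (map nf us)"
  define PC where "PC = tensor (map nf cs)"
  define N where "N = (\<lambda>d. linext (\<lambda>x0. linext (\<lambda>us'. linext (\<lambda>vs. nf_root d x0 (us' @ vs)) PC) PU) X)"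
  have fX: "finite (supp X)" and fU: "finite (supp PU)" and fC: "finite (supp PC)"
    by (auto simp: X_def PU_def PC_def intro!: finite_supp_tensor)
  have "nf (Node b (Node c (x # us) # cs)) = nf_node b (linext (\<lambda>x0. linext (nf_root c x0) PU) X) PC"
    by (simp add: X_def PU_def PC_def nf_node_def)
  also have "\<dots> = linext (\<lambda>x0. linext (\<lambda>us'. nf_node b (nf_root c x0 us') PC) PU) X"
    by (simp add: nf_node_linext_left fX fU finite_supp_linext)
  also have "\<dots> = linext (\<lambda>x0. linext (\<lambda>us'.
                    linext (\<lambda>d. linext (\<lambda>vs. nf_root d x0 (us' @ vs)) PC) (mult b c)) PU) X"
    by (rule linext_cong, rule linext_cong, rule nf_node_nf_root[OF _ fC])
      (simp add: X_def left_leaf_nf)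
  also have "\<dots> = linext N (mult b c)"
    unfolding N_def by (simp add: linext_swap[OF fU finite_supp_mult] linext_swap[OF fX finite_supp_mult])
  also have "\<dots> = linext (\<lambda>d. nf (Node d (x # us @ cs))) (mult b c)"
  proof (rule linext_cong)
    fix d
    have "tensor (map nf (us @ cs)) = linext (\<lambda>vs. linext (\<lambda>ws. delta (vs @ ws)) PC) PU"
      unfolding PU_def PC_def map_append by (rule tensor_append) auto
    then show "N d = nf (Node d (x # us @ cs))"
      by (simp add: N_def nf_node_def X_def linext_linext fU fC finite_supp_linext)
  qed
  finally show ?thesis .
qed

end

inductive contraction :: "'b tree \<Rightarrow> 'b \<Rightarrow> 'b \<Rightarrow> ('b \<Rightarrow> 'b tree) \<Rightarrow> bool" where
  root: "contraction (Node b (Node c (x # us) # cs)) b c (\<lambda>d. Node d (x # us @ cs))"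
| child: "contraction t b c g \<Longrightarrow> contraction (Node a (pre @ t # post)) b c (\<lambda>d. Node a (pre @ g d # post))"

lemma contraction_eq: "contraction s b c f \<Longrightarrow> s = s' \<Longrightarrow> f = f' \<Longrightarrow> contraction s' b c f'"
  by simp

lemma ar_contraction: "contraction s b c f \<Longrightarrow> ar (f d) = ar s"
  by (induction rule: contraction.induct) auto

lemma nodes_contraction: "contraction s b c f \<Longrightarrow> nodes (f d) < nodes s"
  by (induction rule: contraction.induct) auto

lemma contraction_not_Leaf: "contraction s b c f \<Longrightarrow> s \<noteq> Leaf \<and> f d \<noteq> Leaf"
  by (induction rule: contraction.induct) auto

lemma contraction_root_graft:
  "i < ar (Node b (Node c (x # us) # cs)) \<Longrightarrow>
   contraction (graft i (Node b (Node c (x # us) # cs)) u) b c (\<lambda>d. graft i (Node d (x # us @ cs)) u)"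
proof -
  assume "i < ar (Node b (Node c (x # us) # cs))"
  then consider "i < ar x" | "ar x \<le> i" "i < ar x + sum_list (map ar us)"
    | "ar x + sum_list (map ar us) \<le> i" "i - (ar x + sum_list (map ar us)) < sum_list (map ar cs)"
    by fastforce
  then show ?thesis
  proof cases
    case 1
    then show ?thesis
      by (intro contraction_eq[OF contraction.root[of b c "graft i x u" us cs]]) auto
  next
    case 2
    then show ?thesis
      by (intro contraction_eq[OF contraction.root[of b c x "graft_list (i - ar x) us u" cs]])
        (auto simp: graft_list_append_left)
  next
    case 3
    then show ?thesis
      by (intro contraction_eq[OF contraction.root[of b c x us
            "graft_list (i - (ar x + sum_list (map ar us))) cs u"]])
        (auto simp: graft_list_append_right diff_diff_add)
  qed
qed

lemma contraction_graft_left: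
  "contraction s b c f \<Longrightarrow> i < ar s \<Longrightarrow> contraction (graft i s u) b c (\<lambda>d. graft i (f d) u)"
proof (induction arbitrary: i rule: contraction.induct)
  case (root b c x us cs)
  then show ?case by (rule contraction_root_graft)
next
  case (child t b c g a pre post)
  have arg: "\<And>d. ar (g d) = ar t" using child.hyps by (rule ar_contraction)
  let ?P = "sum_list (map ar pre)"
  consider "i < ?P" | "?P \<le> i" "i - ?P < ar t" | "?P \<le> i" "ar t \<le> i - ?P"
    by linarith
  then show ?case
  proof cases
    case 1
    then show ?thesis
      by (intro contraction_eq[OF contraction.child[OF child.hyps, of a "graft_list i pre u" post]])
        (auto simp: graft_list_append_left)
  next
    case 2
    then show ?thesis using arg
      by (intro contraction_eq[OF contraction.child[OF child.IH[OF 2(2)], of a pre post]])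
        (auto simp: graft_list_append_right)
  next
    case 3
    then show ?thesis using arg
      by (intro contraction_eq[OF contraction.child[OF child.hyps, of a pre
            "graft_list (i - ?P - ar t) post u"]])
        (auto simp: graft_list_append_right)
  qed
qed

lemma contraction_graft_right:
  "contraction u b c g \<Longrightarrow> i < ar s \<Longrightarrow> contraction (graft i s u) b c (\<lambda>d. graft i s (g d))"
proof (induction s arbitrary: i)
  case Leaf
  then show ?case by simp
next
  case (Node a ts)
  then have "i < sum_list (map ar ts)" by simp
  from graft_position_split[OF this] obtain pre t post j where
    h: "ts = pre @ t # post" "j < ar t" "i = sum_list (map ar pre) + j" by blast
  then have "contraction (graft j t u) b c (\<lambda>d. graft j t (g d))"
    using Node by simp
  from contraction.child[OF this, of a pre post] show ?case
    by (rule contraction_eq) (use h in \<open>auto simp: graft_list_at\<close>)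
qed

context weight_graded
begin

lemma nf_contraction: "contraction s b c f \<Longrightarrow> nf s = linext (\<lambda>d. nf (f d)) (mult b c)"
proof (induction rule: contraction.induct)
  case (root b c x us cs)
  then show ?case by (rule nf_contract_root)
next
  case (child t b c g a pre post)
  show ?case
  proof (cases pre)
    case Nil
    then show ?thesis using child.IH by (simp add: nf_node_linext_left)
  next
    case (Cons x pre')
    let ?N = "\<lambda>T. tensor (map nf pre' @ T # map nf post)"
    have "nf (Node a (pre @ t # post)) = nf_node a (nf x) (?N (linext (\<lambda>d. nf (g d)) (mult b c)))"
      using Cons child.IH by simp
    also have "\<dots> = linext (\<lambda>d. nf_node a (nf x) (?N (nf (g d)))) (mult b c)"
      by (simp only: tensor_linext) (rule nf_node_linext_right, auto intro!: finite_supp_tensor)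
    also have "\<dots> = linext (\<lambda>d. nf (Node a (pre @ g d # post))) (mult b c)"
      using Cons by simp
    finally show ?thesis .
  qed
qed

lemma wf_contraction:
  "contraction s b c f \<Longrightarrow> wf s \<Longrightarrow> b \<noteq> one \<and> (\<forall>d\<in>supp (mult b c). wf (f d))"
proof (induction rule: contraction.induct)
  case (root b c x us cs)
  then have "d \<in> supp (mult b c) \<Longrightarrow> wf (Node d (x # us @ cs))" for d
    using supp_mult_not_one weight_mult by auto
  then show ?case using root by simp
qed auto

lemma contraction_exists: "wf s \<Longrightarrow> \<not> left_leaf s \<Longrightarrow> \<exists>b c f. contraction s b c f"
proof (induction s)
  case Leaf
  then show ?case by simp
next
  case (Node a ts)
  then obtain t0 ts' where ts: "ts = t0 # ts'" by (cases ts) auto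
  show ?case
  proof (cases t0)
    case (Node c cs)
    with ts \<open>wf (Node a ts)\<close> obtain x us where "cs = x # us" by (cases cs) auto
    then show ?thesis using ts Node contraction.root[of a c x us ts'] by auto
  next
    case Leaf
    then have "\<exists>t\<in>set ts. \<not> left_leaf t" using Node.prems ts by auto
    then obtain pre t post where sp: "ts = pre @ t # post" "\<not> left_leaf t"
      by (metis split_list)
    then obtain b c g where "contraction t b c g" using Node by fastforce
    then show ?thesis using sp contraction.child[of t b c g a pre post] by auto
  qed
qed

lemma nf_graft_left: "wf s \<Longrightarrow> i < ar s \<Longrightarrow> nf (graft i s u) = linext (\<lambda>s'. nf (graft i s' u)) (nf s)"
proof (induction "nodes s" arbitrary: s rule: less_induct)
  case less
  show ?case
  proof (cases "left_leaf s")
    case True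
    then show ?thesis by (simp add: nf_left_leaf)
  next
    case False
    then obtain b c f where st: "contraction s b c f" using contraction_exists less.prems by blast
    have IH: "nf (graft i (f d) u) = linext (\<lambda>s'. nf (graft i s' u)) (nf (f d))"
      if "d \<in> supp (mult b c)" for d
      using less.hyps[OF nodes_contraction[OF st]] wf_contraction[OF st] that less.prems
        ar_contraction[OF st] by metis
    have "nf (graft i s u) = linext (\<lambda>d. nf (graft i (f d) u)) (mult b c)"
      using nf_contraction[OF contraction_graft_left[OF st less.prems(2)]] .
    also have "\<dots> = linext (\<lambda>s'. nf (graft i s' u)) (linext (\<lambda>d. nf (f d)) (mult b c))"
      by (simp add: linext_cong[OF IH] linext_linext)
    finally show ?thesis by (simp add: nf_contraction[OF st])
  qed
qed

lemma nf_graft_right: "wf u \<Longrightarrow> i < ar s \<Longrightarrow> nf (graft i s u) = linext (\<lambda>u'. nf (graft i s u')) (nf u)"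
proof (induction "nodes u" arbitrary: u rule: less_induct)
  case less
  show ?case
  proof (cases "left_leaf u")
    case True
    then show ?thesis by (simp add: nf_left_leaf)
  next
    case False
    then obtain b c g where st: "contraction u b c g" using contraction_exists less.prems by blast
    have IH: "nf (graft i s (g d)) = linext (\<lambda>u'. nf (graft i s u')) (nf (g d))"
      if "d \<in> supp (mult b c)" for d
      using less.hyps[OF nodes_contraction[OF st]] wf_contraction[OF st] that less.prems by metis
    have "nf (graft i s u) = linext (\<lambda>d. nf (graft i s (g d))) (mult b c)"
      using nf_contraction[OF contraction_graft_right[OF st less.prems(2)]] .
    also have "\<dots> = linext (\<lambda>u'. nf (graft i s u')) (linext (\<lambda>d. nf (g d)) (mult b c))"
      by (simp add: linext_cong[OF IH] linext_linext)
    finally show ?thesis by (simp add: nf_contraction[OF st])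
  qed
qed

lemma diff_Tcomp: "x \<in> T n \<Longrightarrow> y \<in> T n \<Longrightarrow> (\<lambda>t. x t - y t) \<in> T n"
  using add_Tcomp[of x n "\<lambda>t. (-1) * y t"] smult_Tcomp[of y n "-1"] by simp

lemma mulv_Acomp: "a1 \<in> Acomp w p \<Longrightarrow> a2 \<in> Acomp w q \<Longrightarrow> mulv mult a1 a2 \<in> Acomp w (p + q)"
  using supp_linext[of "\<lambda>a. linext (mult a) a2" a1] supp_linext[of "mult _" a2] weight_mult
  by (fastforce simp: Acomp_def mulv_eq_linext intro!: finite_supp_linext)

lemma R_max_Tcomp: "R_max w one mult n x \<Longrightarrow> x \<in> T n"
  using lcomp_Tcomp[OF genv_Tcomp genv_Tcomp] genv_Tcomp[OF mulv_Acomp]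
  by (fastforce simp: R_max_def intro!: diff_Tcomp)

abbreviation Imax :: "nat \<Rightarrow> ('b tree \<Rightarrow> 'k) \<Rightarrow> bool" where "Imax \<equiv> I (R_max w one mult)"

lemma R_max_op_ideal: "R_max w one mult n x \<Longrightarrow> Imax n x"
  by (rule op_ideal.gen[OF _ R_max_Tcomp])

lemma nf_gen: "nf (gen w one b) = delta (gen w one b)"
  by (rule nf_left_leaf) (simp add: gen_def)

lemma gen_contract: "b \<noteq> one \<Longrightarrow> c \<noteq> one \<Longrightarrow> d \<in> supp (mult b c) \<Longrightarrow>
   gen w one d = Node d (Leaf # replicate (w c) Leaf @ replicate (w b) Leaf)"
  using supp_mult_not_one weight_mult
  by (simp add: gen_def replicate_add[symmetric] add.commute)

lemma graft_gen_gen: "b \<noteq> one \<Longrightarrow> c \<noteq> one \<Longrightarrow>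
   graft 0 (gen w one b) (gen w one c) = Node b (Node c (Leaf # replicate (w c) Leaf) # replicate (w b) Leaf)"
  by (simp add: gen_def)

lemma nf_graft_gen_gen:
  "nf (graft 0 (gen w one b) (gen w one c)) = linext (\<lambda>d. delta (gen w one d)) (mult b c)"
proof -
  consider "b = one" | "c = one" | "b \<noteq> one" "c \<noteq> one" by blast
  then show ?thesis
  proof cases
    case 3
    have "nf (graft 0 (gen w one b) (gen w one c))
        = linext (\<lambda>d. nf (Node d (Leaf # replicate (w c) Leaf @ replicate (w b) Leaf))) (mult b c)"
      by (simp only: graft_gen_gen[OF 3] nf_contract_root)
    also have "\<dots> = linext (\<lambda>d. delta (gen w one d)) (mult b c)"
      by (rule linext_cong) (metis gen_contract[OF 3] nf_gen)
    finally show ?thesis .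
  qed (simp_all add: gen_def nf_left_leaf)
qed

lemma nf_graft:
  assumes "wf s" and "wf u" and "i < ar s"
  shows "nf (graft i s u) = linext (\<lambda>s'. linext (\<lambda>u'. nf (graft i s' u')) (nf u)) (nf s)"
proof -
  have "nf (graft i s' u) = linext (\<lambda>u'. nf (graft i s' u')) (nf u)" if "s' \<in> supp (nf s)" for s'
    using nf_graft_right[OF assms(2)] wf_nf[OF assms(1) that] assms(3) by simp
  then show ?thesis
    using nf_graft_left[OF assms(1,3)] by (simp cong: linext_cong)
qed

lemma linext_nf_lcomp:
  assumes x: "x \<in> T n" and y: "y \<in> T m" and i: "i < n"
  shows "linext nf (lcomp i x y) = linext (\<lambda>s'. linext (\<lambda>u'. nf (graft i s' u')) (linext nf y)) (linext nf x)"
proof -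
  have fx: "finite (supp x)" and fy: "finite (supp y)" using x y by (simp_all add: finite_supp_Tcomp)
  let ?G = "\<lambda>s' u'. nf (graft i s' u')"
  have "linext nf (lcomp i x y) = linext (\<lambda>s. linext (\<lambda>u. nf (graft i s u)) y) x"
    by (rule linext_lcomp[OF fx fy])
  also have "\<dots> = linext (\<lambda>s. linext (\<lambda>u. linext (\<lambda>s'. linext (?G s') (nf u)) (nf s)) y) x"
  proof (intro linext_cong)
    fix s u assume "s \<in> supp x" "u \<in> supp y"
    then show "nf (graft i s u) = linext (\<lambda>s'. linext (?G s') (nf u)) (nf s)"
      using x y i nf_graft by (auto simp: Tcomp_iff)
  qed
  also have "\<dots> = linext (\<lambda>s'. linext (?G s') (linext nf y)) (linext nf x)"
    by (simp add: linext_swap[OF fy] linext_linext fx fy)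
  finally show ?thesis .
qed

lemma linext_nf_R_max: "R_max w one mult n x \<Longrightarrow> linext nf x = (\<lambda>_. 0)"
proof -
  assume "R_max w one mult n x"
  then obtain p q a1 a2 where a: "a1 \<in> Acomp w p" "a2 \<in> Acomp w q"
    and x: "x = (\<lambda>t. lcomp 0 (genv w one a1) (genv w one a2) t - genv w one (mulv mult a1 a2) t)"
    by (auto simp: R_max_def)
  have f1: "finite (supp a1)" and f2: "finite (supp a2)"
    using a by (simp_all add: finite_supp_Acomp)
  have "linext nf (lcomp 0 (genv w one a1) (genv w one a2))
      = linext (\<lambda>b. linext (\<lambda>c. nf (graft 0 (gen w one b) (gen w one c))) a2) a1"
    by (simp add: linext_lcomp finite_supp_genv f1 f2) (simp add: genv_eq_linext linext_linext f1 f2)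
  also have "\<dots> = linext nf (genv w one (mulv mult a1 a2))"
    by (simp add: nf_graft_gen_gen genv_eq_linext mulv_eq_linext linext_linext f1 f2
        finite_supp_linext nf_gen)
  finally show ?thesis
    by (simp add: x linext_diff finite_supp_lcomp finite_supp_genv finite_supp_mulv f1 f2)
qed

lemma linext_nf_max_ideal: "Imax n x \<Longrightarrow> linext nf x = (\<lambda>_. 0)"
proof (induction rule: op_ideal.induct)
  case (gen n x)
  from gen.hyps(1) show ?case by (rule linext_nf_R_max)
next
  case (add n x y)
  then show ?case
    using op_ideal_Tcomp[OF add.hyps(1)] op_ideal_Tcomp[OF add.hyps(2)]
    by (simp add: linext_add finite_supp_Tcomp)
next
  case (left n x y m i)
  then show ?case using linext_nf_lcomp[OF op_ideal_Tcomp] by simp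
next
  case (right m x y n i)
  then show ?case using linext_nf_lcomp[OF _ op_ideal_Tcomp] by simp
qed (simp_all add: linext_smult)

abbreviation contraction_rel :: "'b tree \<Rightarrow> 'b \<Rightarrow> 'b \<Rightarrow> ('b \<Rightarrow> 'b tree) \<Rightarrow> 'b tree \<Rightarrow> 'k" where
  "contraction_rel s b c f \<equiv> \<lambda>t. delta s t - linext (\<lambda>d. delta (f d)) (mult b c) t"

lemma contraction_rel_graft_left:
  assumes "Imax (ar s') (contraction_rel s' b c f')" and "wf z" and "k < ar s'"
    and "graft k s' z = s" and "\<And>d. graft k (f' d) z = f d"
  shows "Imax (ar s) (contraction_rel s b c f)"
proof -
  have "Imax (ar s' + ar z - 1) (lcomp k (contraction_rel s' b c f') (delta z))"
    by (rule op_ideal.left[OF assms(1) delta_Tcomp[OF assms(2)] assms(3)])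
  moreover have "ar s' + ar z - 1 = ar s" using ar_graft[OF assms(3), of z] assms(4) by simp
  ultimately show ?thesis
    by (simp add: lcomp_eq_linext linext_diff finite_supp_linext linext_linext assms(4,5))
qed

lemma contraction_rel_corolla:
  assumes "b \<noteq> one" and "c \<noteq> one"
  defines "s \<equiv> Node b (Node c (Leaf # replicate (w c) Leaf) # replicate (w b) Leaf)"
  shows "Imax (ar s) (contraction_rel s b c (\<lambda>d. Node d (Leaf # replicate (w c) Leaf @ replicate (w b) Leaf)))"
proof (rule R_max_op_ideal)
  have lc: "lcomp 0 (genv w one (delta b)) (genv w one (delta c)) = delta s"
    using assms by (simp add: genv_eq_linext lcomp_delta gen_def)
  have gm: "genv w one (mulv mult (delta b) (delta c))
      = linext (\<lambda>d. delta (Node d (Leaf # replicate (w c) Leaf @ replicate (w b) Leaf))) (mult b c)"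
    by (simp add: mulv_eq_linext genv_eq_linext gen_contract[OF assms(1,2)] cong: linext_cong)
  show "R_max w one mult (ar s) (contraction_rel s b c
      (\<lambda>d. Node d (Leaf # replicate (w c) Leaf @ replicate (w b) Leaf)))"
    unfolding R_max_def
  proof (intro exI conjI)
    show "(delta b :: 'b \<Rightarrow> 'k) \<in> Acomp w (w b)" "(delta c :: 'b \<Rightarrow> 'k) \<in> Acomp w (w c)"
      by (simp_all add: Acomp_def)
    show "ar s = w b + w c + 1"
      by (simp add: s_def sum_list_replicate)
  qed (simp only: lc gm)
qed

lemma contraction_rel_graft_inner:
  assumes "Imax (ar (Node b (Node c (Leaf # pre @ Leaf # post) # cs)))
      (contraction_rel (Node b (Node c (Leaf # pre @ Leaf # post) # cs)) b c
        (\<lambda>d. Node d (Leaf # (pre @ Leaf # post) @ cs)))"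
    and "wf z"
  shows "Imax (ar (Node b (Node c (Leaf # pre @ z # post) # cs)))
      (contraction_rel (Node b (Node c (Leaf # pre @ z # post) # cs)) b c
        (\<lambda>d. Node d (Leaf # (pre @ z # post) @ cs)))"
  using assms(1)
proof (rule contraction_rel_graft_left[where k = "sum_list (map ar (Leaf # pre))"])
  show "graft (sum_list (map ar (Leaf # pre))) (Node d (Leaf # (pre @ Leaf # post) @ cs)) z
      = Node d (Leaf # (pre @ z # post) @ cs)" for d
    using graft_list_at_Leaf[of "Leaf # pre" "post @ cs" z] by simp
qed (use assms(2) graft_list_at_Leaf[of "Leaf # pre" post z] in simp_all)

lemma contraction_rel_graft_outer:
  assumes "Imax (ar (Node b (Node c (Leaf # us) # pre @ Leaf # post)))
      (contraction_rel (Node b (Node c (Leaf # us) # pre @ Leaf # post)) b c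
        (\<lambda>d. Node d (Leaf # us @ pre @ Leaf # post)))"
    and "wf z"
  shows "Imax (ar (Node b (Node c (Leaf # us) # pre @ z # post)))
      (contraction_rel (Node b (Node c (Leaf # us) # pre @ z # post)) b c
        (\<lambda>d. Node d (Leaf # us @ pre @ z # post)))"
  using assms(1)
proof (rule contraction_rel_graft_left[where k = "sum_list (map ar (Node c (Leaf # us) # pre))"])
  show "graft (sum_list (map ar (Node c (Leaf # us) # pre))) (Node d (Leaf # us @ pre @ Leaf # post)) z
      = Node d (Leaf # us @ pre @ z # post)" for d
    using graft_list_at_Leaf[of "Leaf # us @ pre" post z] by simp
qed (use assms(2) graft_list_at_Leaf[of "Node c (Leaf # us) # pre" post z] in simp_all)

text \<open>By induction on the number of vertices, subtrees hanging off the contracted edge are split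
  off by grafting until only the relation between two generators remains.\<close>

lemma contraction_rel_root:
  "wf (Node b (Node c (x # us) # cs)) \<Longrightarrow>
   Imax (ar (Node b (Node c (x # us) # cs)))
     (contraction_rel (Node b (Node c (x # us) # cs)) b c (\<lambda>d. Node d (x # us @ cs)))"
proof (induction "nodes (Node b (Node c (x # us) # cs))" arbitrary: x us cs rule: less_induct)
  case less
  have wf: "b \<noteq> one" "c \<noteq> one" "length cs = w b" "length us = w c" "wf x"
    "\<forall>t\<in>set us. wf t" "\<forall>t\<in>set cs. wf t"
    using less.prems by auto
  consider "x \<noteq> Leaf"
    | pre z post where "x = Leaf" "us = pre @ z # post" "z \<noteq> Leaf"
    | pre z post where "x = Leaf" "cs = pre @ z # post" "z \<noteq> Leaf"
    | "x = Leaf" "\<forall>t\<in>set us. t = Leaf" "\<forall>t\<in>set cs. t = Leaf"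
    using split_list_nonLeaf[of us] split_list_nonLeaf[of cs] by blast
  then show ?case
  proof cases
    case 1
    have "Imax (ar (Node b (Node c (Leaf # us) # cs)))
        (contraction_rel (Node b (Node c (Leaf # us) # cs)) b c (\<lambda>d. Node d (Leaf # us @ cs)))"
      using less.hyps[of Leaf us cs] less.prems nodes_pos[OF 1] by auto
    then show ?thesis
      by (rule contraction_rel_graft_left[OF _ wf(5), where k = 0]) auto
  next
    case 2
    then have "Imax (ar (Node b (Node c (Leaf # pre @ Leaf # post) # cs)))
        (contraction_rel (Node b (Node c (Leaf # pre @ Leaf # post) # cs)) b c
          (\<lambda>d. Node d (Leaf # (pre @ Leaf # post) @ cs)))"
      using less.hyps[of Leaf "pre @ Leaf # post" cs] less.prems nodes_pos[OF 2(3)] by auto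
    moreover have "wf z" using 2 wf(6) by simp
    ultimately show ?thesis
      unfolding 2(1,2) by (rule contraction_rel_graft_inner)
  next
    case 3
    then have "Imax (ar (Node b (Node c (Leaf # us) # pre @ Leaf # post)))
        (contraction_rel (Node b (Node c (Leaf # us) # pre @ Leaf # post)) b c
          (\<lambda>d. Node d (Leaf # us @ pre @ Leaf # post)))"
      using less.hyps[of Leaf us "pre @ Leaf # post"] less.prems nodes_pos[OF 3(3)] by auto
    moreover have "wf z" using 3 wf(7) by simp
    ultimately show ?thesis
      unfolding 3(1,2) by (rule contraction_rel_graft_outer)
  next
    case 4
    then have "us = replicate (w c) Leaf" "cs = replicate (w b) Leaf"
      using all_Leaf_eq_replicate wf(3,4) by metis+
    with \<open>x = Leaf\<close> show ?thesis
      using contraction_rel_corolla[OF wf(1,2)] by (simp only:)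
  qed
qed

lemma contraction_rel_max_ideal:
  "contraction s b c f \<Longrightarrow> wf s \<Longrightarrow> Imax (ar s) (contraction_rel s b c f)"
proof (induction rule: contraction.induct)
  case (root b c x us cs)
  then show ?case by (rule contraction_rel_root)
next
  case (child t b c g a pre post)
  let ?s0 = "Node a (pre @ Leaf # post)"
  let ?k = "sum_list (map ar pre)"
  have "wf t" "wf ?s0" "?k < ar ?s0" using child.prems by auto
  then have "Imax (ar ?s0 + ar t - 1) (lcomp ?k (delta ?s0) (contraction_rel t b c g))"
    by (intro op_ideal.right[OF child.IH delta_Tcomp])
  moreover have "ar ?s0 + ar t - 1 = ar (Node a (pre @ t # post))" by simp
  ultimately show ?case
    by (simp add: lcomp_eq_linext linext_diff finite_supp_linext linext_linext graft_list_at_Leaf add_ac)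
qed

lemma delta_minus_nf_max_ideal: "wf s \<Longrightarrow> Imax (ar s) (\<lambda>t. delta s t - nf s t)"
proof (induction "nodes s" arbitrary: s rule: less_induct)
  case less
  show ?case
  proof (cases "left_leaf s")
    case True
    then show ?thesis using op_ideal.zero by (simp add: nf_left_leaf)
  next
    case False
    then obtain b c f where st: "contraction s b c f" using contraction_exists less.prems by blast
    have "Imax (ar s) (linext (\<lambda>d t. delta (f d) t - nf (f d) t) (mult b c))"
    proof (rule op_ideal_linext)
      fix d assume "d \<in> supp (mult b c)"
      then show "Imax (ar s) (\<lambda>t. delta (f d) t - nf (f d) t)"
        using less.hyps[OF nodes_contraction[OF st]] wf_contraction[OF st less.prems]
          ar_contraction[OF st] by metis
    qed simp
    from op_ideal.add[OF contraction_rel_max_ideal[OF st less.prems] this]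
    show ?thesis by (simp add: linext_diff_fun nf_contraction[OF st])
  qed
qed

lemma max_envelope_coset_basis: "coset_basis (T n) (Imax n) {t. wf t \<and> left_leaf t}"
  unfolding coset_basis_def
proof (intro conjI ballI impI)
  fix x assume x: "x \<in> T n" and "supp x \<subseteq> {t. wf t \<and> left_leaf t}" and "Imax n x"
  then have "linext nf x = linext delta x"
    by (intro linext_cong) (auto simp: nf_left_leaf)
  then show "x = (\<lambda>_. 0)"
    using linext_nf_max_ideal[OF \<open>Imax n x\<close>] x by (simp add: linext_delta_id finite_supp_Tcomp)
next
  fix x assume x: "x \<in> T n"
  have fx: "finite (supp x)" using x finite_supp_Tcomp by blast
  have "linext nf x \<in> T n"
    using x wf_nf by (intro linext_Tcomp fx) (auto simp: Tcomp_iff)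
  moreover have "supp (linext nf x) \<subseteq> {t. wf t \<and> left_leaf t}"
    using supp_linext[of nf x] x wf_nf left_leaf_nf by (fastforce simp: Tcomp_iff)
  moreover have "Imax n (linext (\<lambda>s t. delta s t - nf s t) x)"
    using x delta_minus_nf_max_ideal by (intro op_ideal_linext fx) (auto simp: Tcomp_iff)
  then have "Imax n (\<lambda>t. x t - linext nf x t)"
    by (simp add: linext_diff_fun linext_delta_id fx)
  ultimately show "\<exists>y\<in>T n. supp y \<subseteq> {t. wf t \<and> left_leaf t} \<and> Imax n (\<lambda>t. x t - y t)"
    by blast
qed

section \<open>The min-envelope\<close>

text \<open>The image of a tree monomial in \<open>\<U>\<^sub>m\<^sub>i\<^sub>n(\<A>) \<cong> \<A>\<^sup>+\<close>: since \<open>a\<^sub>1 \<circ>\<^sub>i a\<^sub>2 = 0\<close> for \<open>i \<ge> 2\<close>,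
  only trees whose non-leftmost inputs are all leaves survive, and they evaluate to the product
  of the labels along the leftmost branch.\<close>

fun eval_tree :: "'b tree \<Rightarrow> 'b \<Rightarrow> 'k" where
  "eval_tree Leaf = delta one"
| "eval_tree (Node b []) = (\<lambda>_. 0)"
| "eval_tree (Node b (x # cs)) =
     (if \<forall>c\<in>set cs. c = Leaf then linext (mult b) (eval_tree x) else (\<lambda>_. 0))"

text \<open>The partial composition \<open>\<circ>\<^sub>i\<^sub>+\<^sub>1\<close> of \<open>\<U>\<^sub>m\<^sub>i\<^sub>n(\<A>)\<close>, transported to \<open>\<A>\<^sup>+\<close>: the product for
  \<open>i = 0\<close>, and otherwise nonzero only when composing with a multiple of the unit.\<close>

definition comp_min :: "nat \<Rightarrow> ('b \<Rightarrow> 'k) \<Rightarrow> ('b \<Rightarrow> 'k) \<Rightarrow> 'b \<Rightarrow> 'k" where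
  "comp_min i X Y = (if i = 0 then linext (\<lambda>a. linext (mult a) Y) X else (\<lambda>z. X z * Y one))"

lemma finite_supp_eval_tree [simp]: "finite (supp (eval_tree t))"
  by (induction t rule: eval_tree.induct) (auto intro!: finite_supp_linext)

lemma weight_eval_tree: "wf t \<Longrightarrow> z \<in> supp (eval_tree t) \<Longrightarrow> w z + 1 = ar t"
proof (induction t arbitrary: z rule: eval_tree.induct)
  case 1
  then show ?case using weight_eq_0_iff by simp
next
  case (3 b x cs)
  then have leaves: "\<forall>c\<in>set cs. c = Leaf" by (auto split: if_splits)
  with 3 obtain a where a: "a \<in> supp (eval_tree x)" "z \<in> supp (mult b a)"
    using supp_linext[of "mult b" "eval_tree x"] by auto
  then have "w a + 1 = ar x" using "3.IH" leaves "3.prems"(1) by fastforce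
  then show ?case
    using weight_mult[OF a(2)] sum_ar_all_Leaf[OF leaves] "3.prems"(1) by simp
qed simp

lemma eval_tree_Acomp: "wf t \<Longrightarrow> eval_tree t \<in> Acomp w (ar t - 1)"
  using weight_eval_tree by (fastforce simp: Acomp_def)

lemma eval_tree_one: "wf u \<Longrightarrow> eval_tree u one = (if u = Leaf then 1 else 0)"
proof (cases "u = Leaf")
  case False
  assume "wf u"
  then have "one \<notin> supp (eval_tree u)"
    using weight_eval_tree[of u one] weight_eq_0_iff[of one] ar_eq_1_iff False by force
  then show ?thesis using False by (simp add: supp_def)
qed (simp add: delta_def)

lemma eval_tree_gen: "eval_tree (gen w one b) = delta b"
  by (simp add: gen_def)

lemma mult_one_eq_delta: "mult one = delta"
  by (rule ext) simp

lemma linext_mult_assoc: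
  assumes fX: "finite (supp X)" and fY: "finite (supp Y)"
  shows "linext (mult b) (linext (\<lambda>a. linext (mult a) Y) X) = linext (\<lambda>a. linext (mult a) Y) (linext (mult b) X)"
proof -
  have "linext (mult b) (linext (\<lambda>a. linext (mult a) Y) X)
      = linext (\<lambda>a. linext (\<lambda>e. linext (\<lambda>f. mult f e) (mult b a)) Y) X"
    by (simp add: linext_linext fX fY finite_supp_linext mult_assoc)
  also have "\<dots> = linext (\<lambda>a. linext (\<lambda>f. linext (mult f) Y) (mult b a)) X"
    by (rule linext_cong, rule linext_swap[OF fY finite_supp_mult])
  also have "\<dots> = linext (\<lambda>a. linext (mult a) Y) (linext (mult b) X)"
    by (simp add: linext_linext fX)
  finally show ?thesis .
qed

lemma eval_tree_graft:
  "wf s \<Longrightarrow> wf u \<Longrightarrow> i < ar s \<Longrightarrow> eval_tree (graft i s u) = comp_min i (eval_tree s) (eval_tree u)"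
proof (induction s arbitrary: i)
  case Leaf
  then show ?case by (simp add: comp_min_def mult_one_eq_delta linext_delta_id)
next
  case (Node b ts)
  then obtain x cs where ts: "ts = x # cs" and wx: "wf x" by (cases ts) auto
  show ?case
  proof (cases "i < ar x")
    case True
    then have "eval_tree (graft i x u) = comp_min i (eval_tree x) (eval_tree u)"
      using Node ts wx by simp
    then show ?thesis using True ts
      by (auto simp: comp_min_def linext_mult_assoc mult.commute[of _ "eval_tree u one"] linext_smult)
  next
    case False
    then have i0: "i \<noteq> 0" using ar_pos[OF wx] by simp
    show ?thesis
    proof (cases "u = Leaf")
      case True
      then show ?thesis using ts False i0 by (simp add: comp_min_def delta_def)
    next
      case False
      have "i - ar x < sum_list (map ar cs)" using \<open>\<not> i < ar x\<close> Node.prems(3) ts by simp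
      then have "\<exists>c\<in>set (graft_list (i - ar x) cs u). c \<noteq> Leaf"
        by (rule graft_list_not_all_Leaf[OF False])
      then show ?thesis
        using ts \<open>\<not> i < ar x\<close> i0 eval_tree_one[OF Node.prems(2)] False
        by (auto simp: comp_min_def)
    qed
  qed
qed

lemma comp_min_linext:
  assumes fx: "finite (supp x)" and fy: "finite (supp y)"
  shows "linext (\<lambda>s. linext (\<lambda>u. comp_min i (eval_tree s) (eval_tree u)) y) x
       = comp_min i (linext eval_tree x) (linext eval_tree y)"
proof (cases "i = 0")
  case True
  have "linext (\<lambda>s. linext (\<lambda>u. linext (\<lambda>a. linext (mult a) (eval_tree u)) (eval_tree s)) y) x
      = linext (\<lambda>s. linext (\<lambda>a. linext (\<lambda>u. linext (mult a) (eval_tree u)) y) (eval_tree s)) x"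
    by (rule linext_cong, rule linext_swap[OF fy]) simp
  also have "\<dots> = linext (\<lambda>a. linext (mult a) (linext eval_tree y)) (linext eval_tree x)"
    by (simp add: linext_linext fx fy)
  finally show ?thesis using True by (simp add: comp_min_def)
next
  case False
  then show ?thesis
    by (simp add: comp_min_def)
      (rule ext, simp add: linext_def sum_distrib_left sum_distrib_right, subst sum.swap,
        simp add: algebra_simps)
qed

lemma linext_eval_lcomp:
  assumes x: "x \<in> T n" and y: "y \<in> T m" and i: "i < n"
  shows "linext eval_tree (lcomp i x y) = comp_min i (linext eval_tree x) (linext eval_tree y)"
proof -
  have fx: "finite (supp x)" and fy: "finite (supp y)" using x y by (simp_all add: finite_supp_Tcomp)
  have "linext eval_tree (lcomp i x y) = linext (\<lambda>s. linext (\<lambda>u. eval_tree (graft i s u)) y) x"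
    by (rule linext_lcomp[OF fx fy])
  also have "\<dots> = linext (\<lambda>s. linext (\<lambda>u. comp_min i (eval_tree s) (eval_tree u)) y) x"
  proof (intro linext_cong)
    fix s u assume "s \<in> supp x" "u \<in> supp y"
    then show "eval_tree (graft i s u) = comp_min i (eval_tree s) (eval_tree u)"
      using x y i eval_tree_graft by (auto simp: Tcomp_iff)
  qed
  also have "\<dots> = comp_min i (linext eval_tree x) (linext eval_tree y)"
    by (rule comp_min_linext[OF fx fy])
  finally show ?thesis .
qed

lemma linext_eval_genv: "finite (supp a) \<Longrightarrow> linext eval_tree (genv w one a) = a"
  by (simp add: genv_eq_linext linext_linext eval_tree_gen linext_delta_id)

abbreviation Imin :: "nat \<Rightarrow> ('b tree \<Rightarrow> 'k) \<Rightarrow> bool" where "Imin \<equiv> I (R_min w one mult)"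

lemma R_min_Tcomp: "R_min w one mult n x \<Longrightarrow> x \<in> T n"
  using R_max_Tcomp lcomp_Tcomp[OF genv_Tcomp genv_Tcomp] by (fastforce simp: R_min_def)

lemma R_min_op_ideal: "R_min w one mult n x \<Longrightarrow> Imin n x"
  by (rule op_ideal.gen[OF _ R_min_Tcomp])

lemma max_ideal_min_ideal: "Imax n x \<Longrightarrow> Imin n x"
  by (erule op_ideal_mono) (simp add: R_min_def)

lemma linext_eval_R_min: "R_min w one mult n x \<Longrightarrow> linext eval_tree x = (\<lambda>_. 0)"
  unfolding R_min_def
proof (elim disjE exE conjE)
  assume "R_max w one mult n x"
  then obtain p q a1 a2 where a: "a1 \<in> Acomp w p" "a2 \<in> Acomp w q"
    and x: "x = (\<lambda>t. lcomp 0 (genv w one a1) (genv w one a2) t - genv w one (mulv mult a1 a2) t)"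
    by (auto simp: R_max_def)
  have f1: "finite (supp a1)" and f2: "finite (supp a2)"
    using a by (simp_all add: finite_supp_Acomp)
  have "linext eval_tree (lcomp 0 (genv w one a1) (genv w one a2)) = mulv mult a1 a2"
    using linext_eval_lcomp[OF genv_Tcomp[OF a(1)] genv_Tcomp[OF a(2)]]
    by (simp add: linext_eval_genv f1 f2 comp_min_def mulv_eq_linext)
  then show ?thesis
    by (simp add: x linext_diff finite_supp_lcomp finite_supp_genv finite_supp_mulv f1 f2
        linext_eval_genv)
next
  fix p q a1 a2 i
  assume a: "a1 \<in> Acomp w p" "a2 \<in> Acomp w q" and "1 \<le> q" "1 \<le> i" "i \<le> p"
    and x: "x = lcomp i (genv w one a1) (genv w one a2)"
  have "a2 one = 0"
    using a(2) \<open>1 \<le> q\<close> weight_eq_0_iff[of one] by (force simp: Acomp_def supp_def)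
  then show ?thesis
    using linext_eval_lcomp[OF genv_Tcomp[OF a(1)] genv_Tcomp[OF a(2)], of i] a \<open>1 \<le> i\<close> \<open>i \<le> p\<close>
    by (simp add: x linext_eval_genv finite_supp_Acomp comp_min_def)
qed

lemma linext_eval_min_ideal: "Imin n x \<Longrightarrow> linext eval_tree x = (\<lambda>_. 0)"
proof (induction rule: op_ideal.induct)
  case (gen n x)
  from gen.hyps(1) show ?case by (rule linext_eval_R_min)
next
  case (add n x y)
  then show ?case
    using op_ideal_Tcomp[OF add.hyps(1)] op_ideal_Tcomp[OF add.hyps(2)]
    by (simp add: linext_add finite_supp_Tcomp)
next
  case (left n x y m i)
  then show ?case using linext_eval_lcomp[OF op_ideal_Tcomp] by (simp add: comp_min_def)
next
  case (right m x y n i)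
  then show ?case using linext_eval_lcomp[OF _ op_ideal_Tcomp] by (simp add: comp_min_def)
qed (simp_all add: linext_smult)

lemma eval_tree_contraction:
  "contraction s b c f \<Longrightarrow> eval_tree s = linext (\<lambda>d. eval_tree (f d)) (mult b c)"
proof (induction rule: contraction.induct)
  case (root b c x us cs)
  show ?case
  proof (cases "(\<forall>t\<in>set us. t = Leaf) \<and> (\<forall>t\<in>set cs. t = Leaf)")
    case True
    have "linext (mult b) (linext (mult c) (eval_tree x))
        = linext (\<lambda>a. linext (\<lambda>d. mult d a) (mult b c)) (eval_tree x)"
      by (simp add: linext_linext mult_assoc)
    also have "\<dots> = linext (\<lambda>d. linext (mult d) (eval_tree x)) (mult b c)"
      by (rule linext_swap) auto
    finally show ?thesis using True by (simp add: ball_Un)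
  next
    case False
    then have "\<not> (\<forall>c\<in>set (us @ cs). c = Leaf)" by auto
    then show ?thesis using False by (simp only: eval_tree.simps if_False linext_zero_fun) auto
  qed
next
  case (child t b c g a pre post)
  show ?case
  proof (cases pre)
    case Nil
    show ?thesis
    proof (cases "\<forall>t\<in>set post. t = Leaf")
      case True
      then show ?thesis using Nil child.IH by (simp add: linext_linext)
    next
      case False
      then show ?thesis using Nil by (simp only: append_Nil eval_tree.simps if_False linext_zero_fun)
    qed
  next
    case (Cons x pre')
    then show ?thesis using contraction_not_Leaf[OF child.hyps] by simp
  qed
qed

text \<open>This is where the extra relations of \<open>\<U>\<^sub>m\<^sub>i\<^sub>n\<close> enter: modulo the ideal, grafting a tree
  of positive weight into a non-leftmost leaf is a composition \<open>a\<^sub>1 \<circ>\<^sub>k\<^sub>+\<^sub>1 a\<^sub>2\<close> of generators.\<close>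

lemma graft_min_ideal:
  assumes ws: "wf s" and wz: "wf z" and "z \<noteq> Leaf" and k: "1 \<le> k" "k < ar s"
    and IH1: "Imin (ar s) (\<lambda>y. delta s y - genv w one (eval_tree s) y)"
    and IH2: "Imin (ar z) (\<lambda>y. delta z y - genv w one (eval_tree z) y)"
  shows "Imin (ar (graft k s z)) (delta (graft k s z))"
proof -
  define G1 where "G1 = genv w one (eval_tree s)"
  define G2 where "G2 = genv w one (eval_tree z)"
  have G1: "G1 \<in> T (ar s)" and G2: "G2 \<in> T (ar z)"
    using genv_Tcomp[OF eval_tree_Acomp[OF ws]] genv_Tcomp[OF eval_tree_Acomp[OF wz]]
      ar_pos[OF ws] ar_pos[OF wz] by (simp_all add: G1_def G2_def)
  have arz: "2 \<le> ar z" using wz \<open>z \<noteq> Leaf\<close> ar_Node_ge_2 by (cases z) auto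
  have ar: "ar (graft k s z) = ar s + ar z - 1" using ar_graft[OF k(2), of z] by simp
  have "Imin (ar (graft k s z)) (lcomp k (\<lambda>y. delta s y - G1 y) (delta z))"
    using op_ideal.left[OF IH1[folded G1_def] delta_Tcomp[OF wz] k(2)] ar by simp
  moreover have "Imin (ar (graft k s z)) (lcomp k G1 (\<lambda>y. delta z y - G2 y))"
    using op_ideal.right[OF IH2[folded G2_def] G1 k(2)] ar by (simp add: add.commute)
  moreover have "R_min w one mult (ar (graft k s z)) (lcomp k G1 G2)"
    unfolding R_min_def
  proof (intro disjI2 exI conjI)
    show "eval_tree s \<in> Acomp w (ar s - 1)" "eval_tree z \<in> Acomp w (ar z - 1)"
      using eval_tree_Acomp ws wz by auto
    show "ar (graft k s z) = ar s - 1 + (ar z - 1) + 1"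
      using ar arz ar_pos[OF ws] by simp
  qed (use k arz in \<open>simp_all add: G1_def G2_def\<close>)
  then have "Imin (ar (graft k s z)) (lcomp k G1 G2)"
    by (rule R_min_op_ideal)
  ultimately have "Imin (ar (graft k s z)) (\<lambda>y. (\<lambda>y. lcomp k (\<lambda>y. delta s y - G1 y) (delta z) y
      + lcomp k G1 (\<lambda>y. delta z y - G2 y) y) y + lcomp k G1 G2 y)"
    by (intro op_ideal.add)
  moreover have "finite (supp G1)" "finite (supp G2)"
    by (simp_all add: G1_def G2_def finite_supp_genv)
  ultimately show ?thesis
    by (simp add: lcomp_diff_left lcomp_diff_right lcomp_delta del: graft.simps graft_list.simps)
qed

lemma delta_minus_genv_eval_contraction:
  assumes st: "contraction t b c f" and "wf t"
    and IH: "\<And>d. d \<in> supp (mult b c) \<Longrightarrow> Imin (ar t) (\<lambda>y. delta (f d) y - genv w one (eval_tree (f d)) y)"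
  shows "Imin (ar t) (\<lambda>y. delta t y - genv w one (eval_tree t) y)"
proof -
  have "Imin (ar t) (linext (\<lambda>d y. delta (f d) y - genv w one (eval_tree (f d)) y) (mult b c))"
    using IH by (rule op_ideal_linext[OF finite_supp_mult])
  from op_ideal.add[OF max_ideal_min_ideal[OF contraction_rel_max_ideal[OF st \<open>wf t\<close>]] this]
  show ?thesis
    by (simp add: linext_diff_fun eval_tree_contraction[OF st] genv_linext)
qed

lemma delta_minus_genv_eval_min_ideal:
  "wf t \<Longrightarrow> Imin (ar t) (\<lambda>y. delta t y - genv w one (eval_tree t) y)"
proof (induction "nodes t" arbitrary: t rule: less_induct)
  case less
  show ?case
  proof (cases "left_leaf t")
    case False
    then obtain b c f where st: "contraction t b c f" using contraction_exists less.prems by blast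
    show ?thesis
    proof (rule delta_minus_genv_eval_contraction[OF st less.prems])
      fix d assume "d \<in> supp (mult b c)"
      then show "Imin (ar t) (\<lambda>y. delta (f d) y - genv w one (eval_tree (f d)) y)"
        using less.hyps[OF nodes_contraction[OF st]] wf_contraction[OF st less.prems]
          ar_contraction[OF st] by metis
    qed
  next
    case True
    show ?thesis
    proof (cases t)
      case Leaf
      then show ?thesis using op_ideal.zero by (simp add: genv_eq_linext gen_def)
    next
      case (Node b ts)
      with True obtain cs where t: "t = Node b (Leaf # cs)" by (cases ts) auto
      with less.prems have wb: "b \<noteq> one" "length cs = w b" "\<forall>c\<in>set cs. wf c" by auto
      show ?thesis
      proof (cases "\<forall>c\<in>set cs. c = Leaf")
        case True
        then have "t = gen w one b" using t wb all_Leaf_eq_replicate by (metis gen_eq_corolla replicate_Suc)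
        then show ?thesis using op_ideal.zero by (simp add: genv_eq_linext eval_tree_gen)
      next
        case False
        then obtain pre z post where cs: "cs = pre @ z # post" "z \<noteq> Leaf"
          using split_list_nonLeaf by blast
        let ?t' = "Node b (Leaf # pre @ Leaf # post)"
        let ?k = "sum_list (map ar (Leaf # pre))"
        have graft_ideal: "Imin (ar (graft ?k ?t' z)) (delta (graft ?k ?t' z))"
        proof (rule graft_min_ideal)
          show "wf ?t'" "wf z" using wb cs by auto
          moreover have "nodes ?t' < nodes t" "nodes z < nodes t"
            using t cs nodes_pos[OF cs(2)] by simp_all
          ultimately show "Imin (ar ?t') (\<lambda>y. delta ?t' y - genv w one (eval_tree ?t') y)"
            "Imin (ar z) (\<lambda>y. delta z y - genv w one (eval_tree z) y)"
            using less.hyps by blast+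
        qed (use cs in simp_all)
        have "graft ?k ?t' z = t"
          using t cs graft_list_at_Leaf[of "Leaf # pre" post z] by simp
        moreover have "eval_tree t = (\<lambda>_. 0)" using False t by auto
        ultimately show ?thesis using graft_ideal by (simp add: genv_eq_linext)
      qed
    qed
  qed
qed

lemma linext_eval_image: "linext eval_tree ` T n = Aplus w n"
proof (cases "n = 0")
  case True
  then show ?thesis by (simp add: Tcomp_0 Aplus_def)
next
  case False
  have "linext eval_tree x \<in> Acomp w (n - 1)" if x: "x \<in> T n" for x
    using x supp_linext[of eval_tree x] weight_eval_tree
    by (fastforce simp: Acomp_def Tcomp_iff intro: finite_supp_linext)
  moreover have "a \<in> linext eval_tree ` T n" if a: "a \<in> Acomp w (n - 1)" for a
    using genv_Tcomp[OF a] linext_eval_genv[OF finite_supp_Acomp[OF a]] False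
    by (metis Suc_pred' bot_nat_0.not_eq_extremum image_eqI)
  ultimately show ?thesis using False by (auto simp: Aplus_def)
qed

lemma min_envelope_iso: "quotient_iso (T n) (Imin n) (Aplus w n :: ('b \<Rightarrow> 'k) set)"
  unfolding quotient_iso_def
proof (intro exI[of _ "linext eval_tree"] conjI ballI allI)
  fix x y assume "x \<in> T n" "y \<in> T n"
  then show "linext eval_tree (\<lambda>t. x t + y t) = (\<lambda>b. linext eval_tree x b + linext eval_tree y b)"
    by (simp add: linext_add finite_supp_Tcomp)
next
  fix x assume x: "x \<in> T n"
  then have fx: "finite (supp x)" by (rule finite_supp_Tcomp)
  have "Imin n (linext (\<lambda>s y. delta s y - genv w one (eval_tree s) y) x)"
    using x delta_minus_genv_eval_min_ideal by (intro op_ideal_linext fx) (auto simp: Tcomp_iff)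
  then have "Imin n (\<lambda>y. x y - genv w one (linext eval_tree x) y)"
    by (simp add: linext_diff_fun linext_delta_id fx genv_linext)
  then show "linext eval_tree x = (\<lambda>_. 0) \<longleftrightarrow> Imin n x"
    using linext_eval_min_ideal by (auto simp: genv_eq_linext)
qed (simp_all add: linext_smult linext_eval_image)

end

theorem theorem2p3:
  fixes w :: "'b \<Rightarrow> nat" and one :: 'b and mult :: "'b \<Rightarrow> 'b \<Rightarrow> 'b \<Rightarrow> 'k::field"
  assumes "wg_algebra w one mult"
  shows "(\<forall>n. quotient_iso (Tcomp w one n) (op_ideal w one (R_min w one mult) n)
                 (Aplus w n :: ('b \<Rightarrow> 'k) set))
       \<and> (\<forall>n. coset_basis (Tcomp w one n :: ('b tree \<Rightarrow> 'k) set)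
                 (op_ideal w one (R_max w one mult) n)
                 {t. wf_tree w one t \<and> left_leaf t})"
proof -
  interpret weight_graded w one mult by unfold_locales (rule assms)
  show ?thesis using min_envelope_iso max_envelope_coset_basis by blast
qed

end
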